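(* Let $a,b:\mathbb{R}\to\mathbb{R}$ be positive even $C^1$ functions with $a^{-1},b\in L^1(\mathbb{R})$, and let $G\in C^2(\mathbb{R})$ be nonnegative and even, such that for some $M>0$, $G'(s)\le0$ for $s<-M$ and $G'(s)\ge0$ for $s>M$. If $$\frac{1}{16\,\|a^{-1}\|_{L^1(\mathbb{R})}\,\|b\|_{L^1(\mathbb{R})}}\ge -G''(0)>-G''(s)\quad\text{for all } s\ne0,$$ then for every $L>0$ and every $m>0$ the functional $\mathcal{E}(\cdot,(-L,L))$ admits a unique critical point in $H^1_m((-L,L))$.
   Context: $H^1_m((-L,L)):=\{u\in H^1((-L,L)):u(-L)=-m,\ u(L)=m\}$ and $\mathcal{E}(u,(-L,L)):=\int_{-L}^L\{\tfrac12(u')^2a(x)+G(u)b(x)\}\,dx$. A critical point is a weak solution in $H^1_m((-L,L))$ of $-(au')'+bG'(u)=0$. *)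

theory Defs
  imports "HOL-Analysis.Analysis"
begin

text \<open>H^1 on (-L,L) in one dimension: u (its continuous representative on [-L,L])
  is the integral of an L^2 function v, the weak derivative of u.\<close>
definition H1_deriv :: "real \<Rightarrow> (real \<Rightarrow> real) \<Rightarrow> (real \<Rightarrow> real) \<Rightarrow> bool" where
  "H1_deriv L u v \<longleftrightarrow>
     v integrable_on {-L..L} \<and> (\<lambda>x. (v x)\<^sup>2) integrable_on {-L..L} \<and>
     (\<forall>x\<in>{-L..L}. (v has_integral (u x - u (-L))) {-L..x})"

definition H1 :: "real \<Rightarrow> (real \<Rightarrow> real) \<Rightarrow> bool" where
  "H1 L u \<longleftrightarrow> (\<exists>v. H1_deriv L u v)"

definition H1m :: "real \<Rightarrow> real \<Rightarrow> (real \<Rightarrow> real) \<Rightarrow> bool" where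
  "H1m L m u \<longleftrightarrow> H1 L u \<and> u (-L) = -m \<and> u L = m"

definition energy :: "(real \<Rightarrow> real) \<Rightarrow> (real \<Rightarrow> real) \<Rightarrow> (real \<Rightarrow> real) \<Rightarrow> real
    \<Rightarrow> (real \<Rightarrow> real) \<Rightarrow> (real \<Rightarrow> real) \<Rightarrow> real" where
  "energy a b G L u u' = integral {-L..L} (\<lambda>x. (u' x)\<^sup>2 / 2 * a x + G (u x) * b x)"

text \<open>Critical point of the energy: a weak solution in H^1_m of -(a u')' + b G'(u) = 0,
  tested against all H^1_0 functions.\<close>
definition critical_point :: "(real \<Rightarrow> real) \<Rightarrow> (real \<Rightarrow> real) \<Rightarrow> (real \<Rightarrow> real) \<Rightarrow> real
    \<Rightarrow> real \<Rightarrow> (real \<Rightarrow> real) \<Rightarrow> bool" where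
  "critical_point a b G L m u \<longleftrightarrow> H1m L m u \<and>
     (\<exists>v. H1_deriv L u v \<and>
        (\<forall>\<phi> \<psi>. H1_deriv L \<phi> \<psi> \<and> \<phi> (-L) = 0 \<and> \<phi> L = 0 \<longrightarrow>
           ((\<lambda>x. a x * v x * \<psi> x + b x * deriv G (u x) * \<phi> x) has_integral 0) {-L..L}))"

end

theory Submission
  imports Defs
begin

text \<open>
  Uniqueness: for two critical points \<open>u\<close>, \<open>w\<close>, test the difference of their equations with
  \<open>\<phi> = u - w\<close>. Since \<open>G''\<close> is minimal at \<open>0\<close>, \<open>g = G'\<close> satisfies
  \<open>(g x - g y) (x - y) \<ge> G''(0) (x - y)\<^sup>2\<close>, hence \<open>\<integral> a \<phi>'\<^sup>2 \<le> -G''(0) \<integral> b \<phi>\<^sup>2\<close>. As \<open>\<phi>\<close>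
  vanishes at \<open>\<plusminus>L\<close>, \<open>2 \<bar>\<phi>\<bar> \<le> \<integral> \<bar>\<phi>'\<bar>\<close> and \<open>(\<integral> \<bar>\<phi>'\<bar>)\<^sup>2 \<le> \<integral> 1/a \<cdot> \<integral> a \<phi>'\<^sup>2\<close>, so
  \<open>\<integral> a \<phi>'\<^sup>2 \<le> (-G''(0) / 4) \<integral> 1/a \<integral> b \<integral> a \<phi>'\<^sup>2\<close>; the smallness hypothesis makes the factor
  less than \<open>1\<close>, forcing \<open>\<phi> = 0\<close>.

  Existence is by shooting: truncate \<open>G'\<close> outside \<open>[-R, R]\<close> with \<open>R > max m M\<close>, solve
  \<open>(a u')' = b G'(u)\<close>, \<open>u(-L) = -m\<close>, \<open>a u'(-L) = s\<close> in integral form by a Banach fixed point in an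
  exponentially weighted sup norm, and pick \<open>s\<close> with \<open>u(L) = m\<close> by the intermediate value
  theorem. Because \<open>G'\<close> has the sign of its argument beyond \<open>\<plusminus>M\<close>, a maximum principle gives \<open>\<bar>u\<bar> \<le> R\<close>,
  so the truncation is inactive, and integrating by parts against an \<open>H\<^sup>1\<close> test function turns
  the integral equation into the weak one.
\<close>

section \<open>Integration by parts against a primitive\<close>
lemma abs_integral_le_integral:
  fixes f g :: "'a::euclidean_space \<Rightarrow> real"
  assumes "f integrable_on S" "g integrable_on S" "\<And>x. x \<in> S \<Longrightarrow> \<bar>f x\<bar> \<le> g x"
  shows "\<bar>integral S f\<bar> \<le> integral S g"
  using integral_norm_bound_integral[OF assms(1,2)] assms(3) by simp

lemma abs_integral_mult_le:
  fixes h \<psi> :: "'a::euclidean_space \<Rightarrow> real"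
  assumes "(\<lambda>x. h x * \<psi> x) integrable_on S" "(\<lambda>x. \<bar>\<psi> x\<bar>) integrable_on S"
    and "\<And>x. x \<in> S \<Longrightarrow> \<bar>h x\<bar> \<le> C"
  shows "\<bar>integral S (\<lambda>x. h x * \<psi> x)\<bar> \<le> C * integral S (\<lambda>x. \<bar>\<psi> x\<bar>)"
proof -
  have "\<bar>integral S (\<lambda>x. h x * \<psi> x)\<bar> \<le> integral S (\<lambda>x. C * \<bar>\<psi> x\<bar>)"
    using assms by (intro abs_integral_le_integral integrable_on_mult_right)
      (auto simp: abs_mult intro: mult_right_mono)
  then show ?thesis by simp
qed

lemma integral_interval_diff:
  fixes f :: "real \<Rightarrow> 'a::banach"
  assumes "f integrable_on {a..c}" "a \<le> b" "b \<le> c"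
  shows "integral {a..c} f - integral {a..b} f = integral {b..c} f"
  using Henstock_Kurzweil_Integration.integral_combine[OF assms(2,3,1)] by (simp add: algebra_simps)

lemma absolutely_integrable_if_square_integrable:
  fixes \<psi> :: "real \<Rightarrow> real"
  assumes "\<psi> integrable_on {a..b}" "(\<lambda>x. (\<psi> x)\<^sup>2) integrable_on {a..b}"
  shows "\<psi> absolutely_integrable_on {a..b}"
proof (rule measurable_bounded_by_integrable_imp_absolutely_integrable)
  show "\<psi> \<in> borel_measurable (lebesgue_on {a..b})"
    using assms(1) integrable_imp_measurable by blast
  show "(\<lambda>x. (1 + (\<psi> x)\<^sup>2) / 2) integrable_on {a..b}"
    using assms(2) by (intro integrable_on_divide integrable_add) auto
  show "norm (\<psi> x) \<le> (1 + (\<psi> x)\<^sup>2) / 2" for x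
    using sum_squares_bound[of 1 "\<bar>\<psi> x\<bar>"] by (simp add: power2_eq_square)
qed auto

lemma integrable_product_if_square_integrable:
  fixes v w :: "real \<Rightarrow> real"
  assumes "v integrable_on {a..b}" "(\<lambda>x. (v x)\<^sup>2) integrable_on {a..b}"
    and "w integrable_on {a..b}" "(\<lambda>x. (w x)\<^sup>2) integrable_on {a..b}"
  shows "(\<lambda>x. v x * w x) integrable_on {a..b}"
proof (rule measurable_bounded_by_integrable_imp_integrable)
  show "(\<lambda>x. v x * w x) \<in> borel_measurable (lebesgue_on {a..b})"
    using assms(1,3) integrable_imp_measurable by (intro borel_measurable_times) auto
  show "(\<lambda>x. ((v x)\<^sup>2 + (w x)\<^sup>2) / 2) integrable_on {a..b}"
    using assms by (intro integrable_on_divide integrable_add) auto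
  show "norm (v x * w x) \<le> ((v x)\<^sup>2 + (w x)\<^sup>2) / 2" for x
    using sum_squares_bound[of "\<bar>v x\<bar>" "\<bar>w x\<bar>"] by (simp add: abs_mult power2_eq_square)
qed auto

lemma absolutely_integrable_continuous_mult:
  fixes k \<psi> :: "real \<Rightarrow> real"
  assumes "continuous_on {a..b} k" "\<psi> absolutely_integrable_on {a..b}"
  shows "(\<lambda>x. k x * \<psi> x) absolutely_integrable_on {a..b}"
  using assms
  by (intro absolutely_integrable_bounded_measurable_product_real)
    (auto intro: continuous_imp_measurable_on_sets_lebesgue compact_imp_bounded compact_continuous_image)

context
  fixes F f \<phi> \<psi> :: "real \<Rightarrow> real" and \<alpha> \<beta> :: real
  assumes F_deriv: "\<And>x. x \<in> {\<alpha>..\<beta>} \<Longrightarrow> (F has_real_derivative f x) (at x within {\<alpha>..\<beta>})"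
    and f_cont: "continuous_on {\<alpha>..\<beta>} f"
    and \<psi>_abs_int: "\<psi> absolutely_integrable_on {\<alpha>..\<beta>}"
    and \<phi>_primitive: "\<And>x. x \<in> {\<alpha>..\<beta>} \<Longrightarrow> (\<psi> has_integral \<phi> x - \<phi> \<alpha>) {\<alpha>..x}"
begin

private lemma primitive_continuous: "continuous_on {\<alpha>..\<beta>} F"
  unfolding continuous_on_eq_continuous_within using F_deriv DERIV_continuous by blast

private lemma integrable_on_subintervals:
  assumes "\<alpha> \<le> y" "z \<le> \<beta>"
  shows "\<psi> integrable_on {y..z}" "(\<lambda>x. \<bar>\<psi> x\<bar>) integrable_on {y..z}"
    and "(\<lambda>x. F x * \<psi> x) integrable_on {y..z}"
proof -
  have "(\<lambda>x. F x * \<psi> x) absolutely_integrable_on {\<alpha>..\<beta>}"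
    by (rule absolutely_integrable_continuous_mult[OF primitive_continuous \<psi>_abs_int])
  then have "\<psi> integrable_on {\<alpha>..\<beta>}" "(\<lambda>x. \<bar>\<psi> x\<bar>) integrable_on {\<alpha>..\<beta>}"
    and "(\<lambda>x. F x * \<psi> x) integrable_on {\<alpha>..\<beta>}"
    using \<psi>_abs_int unfolding absolutely_integrable_on_def by auto
  then show "\<psi> integrable_on {y..z}" "(\<lambda>x. \<bar>\<psi> x\<bar>) integrable_on {y..z}"
    and "(\<lambda>x. F x * \<psi> x) integrable_on {y..z}"
    using assms by (auto elim!: integrable_subinterval_real)
qed

lemma primitive_lipschitz:
  "\<exists>C\<ge>0. \<forall>x\<in>{\<alpha>..\<beta>}. \<forall>y\<in>{\<alpha>..\<beta>}. \<bar>F x - F y\<bar> \<le> C * \<bar>x - y\<bar>"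
proof -
  obtain C where C: "C > 0" "\<And>x. x \<in> {\<alpha>..\<beta>} \<Longrightarrow> \<bar>f x\<bar> \<le> C"
    using compact_imp_bounded[OF compact_continuous_image[OF f_cont]] by (force simp: bounded_pos)
  have "\<bar>F x - F y\<bar> \<le> C * \<bar>x - y\<bar>" if "x \<in> {\<alpha>..\<beta>}" "y \<in> {\<alpha>..\<beta>}" for x y
    using field_differentiable_bound[of "{\<alpha>..\<beta>}" F f C x y] F_deriv C that by auto
  then show ?thesis using C(1) by (intro exI[of _ C]) auto
qed

lemma by_parts_remainder_bound:
  assumes C: "0 \<le> C" "\<And>x y. x \<in> {\<alpha>..\<beta>} \<Longrightarrow> y \<in> {\<alpha>..\<beta>} \<Longrightarrow> \<bar>F x - F y\<bar> \<le> C * \<bar>x - y\<bar>"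
    and yz: "\<alpha> \<le> y" "y \<le> z" "z \<le> \<beta>" and c: "c \<in> {y, z}"
  shows "\<bar>F z * \<phi> z - F y * \<phi> y - integral {y..z} (\<lambda>x. F x * \<psi> x) - (F z - F y) * \<phi> c\<bar>
    \<le> C * (z - y) * integral {y..z} (\<lambda>x. \<bar>\<psi> x\<bar>)"
proof -
  note int = integrable_on_subintervals[OF yz(1,3)]
  have "\<phi> z - \<phi> y = integral {y..z} \<psi>"
    using \<phi>_primitive[of z] \<phi>_primitive[of y] yz
      integral_interval_diff[OF integrable_on_subintervals(1)[of \<alpha> z], of y]
    by (auto simp: integral_unique)
  \<comment> \<open>\<open>y + z - c\<close> is the endpoint other than \<open>c\<close>\<close>
  then have "F z * \<phi> z - F y * \<phi> y - integral {y..z} (\<lambda>x. F x * \<psi> x) - (F z - F y) * \<phi> c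
      = F (y + z - c) * integral {y..z} \<psi> - integral {y..z} (\<lambda>x. F x * \<psi> x)"
    using c by (auto simp: algebra_simps)
  also have "\<dots> = integral {y..z} (\<lambda>x. (F (y + z - c) - F x) * \<psi> x)"
    using int by (simp add: left_diff_distrib integral_diff integrable_on_mult_right)
  also have "\<bar>\<dots>\<bar> \<le> C * (z - y) * integral {y..z} (\<lambda>x. \<bar>\<psi> x\<bar>)"
  proof (rule abs_integral_mult_le)
    show "(\<lambda>x. (F (y + z - c) - F x) * \<psi> x) integrable_on {y..z}"
      using int by (simp add: left_diff_distrib integrable_diff integrable_on_mult_right)
    show "\<bar>F (y + z - c) - F x\<bar> \<le> C * (z - y)" if "x \<in> {y..z}" for x
    proof -
      have "\<bar>F (y + z - c) - F x\<bar> \<le> C * \<bar>y + z - c - x\<bar>"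
        using C(2)[of "y + z - c" x] c yz that by auto
      also have "\<dots> \<le> C * (z - y)"
        using C(1) c that by (intro mult_left_mono) auto
      finally show ?thesis .
    qed
  qed (rule int(2))
  finally show ?thesis .
qed

lemma derivative_product_primitive:
  assumes z0: "z0 \<in> {\<alpha>..\<beta>}"
  shows "((\<lambda>z. F z * \<phi> z - integral {\<alpha>..z} (\<lambda>x. F x * \<psi> x)) has_real_derivative f z0 * \<phi> z0)
           (at z0 within {\<alpha>..\<beta>})"
proof -
  define Q where "Q z = F z * \<phi> z - integral {\<alpha>..z} (\<lambda>x. F x * \<psi> x)" for z
  define \<Psi> where "\<Psi> z = integral {\<alpha>..z} (\<lambda>x. \<bar>\<psi> x\<bar>)" for z
  define E where "E z = Q z - Q z0 - (F z - F z0) * \<phi> z0" for z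
  obtain C where C: "0 \<le> C" "\<And>x y. x \<in> {\<alpha>..\<beta>} \<Longrightarrow> y \<in> {\<alpha>..\<beta>} \<Longrightarrow> \<bar>F x - F y\<bar> \<le> C * \<bar>x - y\<bar>"
    using primitive_lipschitz by blast
  have remainder: "\<bar>Q z - Q y - (F z - F y) * \<phi> c\<bar> \<le> C * (z - y) * (\<Psi> z - \<Psi> y)"
    and \<Psi>_mono: "\<Psi> y \<le> \<Psi> z" if yz: "\<alpha> \<le> y" "y \<le> z" "z \<le> \<beta>" and c: "c \<in> {y, z}" for y z c
  proof -
    note int = integrable_on_subintervals[of \<alpha> z]
    have Q_diff: "Q z - Q y = F z * \<phi> z - F y * \<phi> y - integral {y..z} (\<lambda>x. F x * \<psi> x)"
      unfolding Q_def using integral_interval_diff[OF int(3), of y] yz by simp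
    have \<Psi>_diff: "\<Psi> z - \<Psi> y = integral {y..z} (\<lambda>x. \<bar>\<psi> x\<bar>)"
      unfolding \<Psi>_def using integral_interval_diff[OF int(2), of y] yz by simp
    with Q_diff show "\<bar>Q z - Q y - (F z - F y) * \<phi> c\<bar> \<le> C * (z - y) * (\<Psi> z - \<Psi> y)"
      using by_parts_remainder_bound[OF C yz c] by simp
    have "0 \<le> integral {y..z} (\<lambda>x. \<bar>\<psi> x\<bar>)"
      using integrable_on_subintervals(2)[OF yz(1,3)] by (intro integral_nonneg) auto
    then show "\<Psi> y \<le> \<Psi> z" using \<Psi>_diff by simp
  qed
  have E_bound: "\<bar>E z\<bar> \<le> C * \<bar>\<Psi> z - \<Psi> z0\<bar> * \<bar>z - z0\<bar>" if z: "z \<in> {\<alpha>..\<beta>}" for z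
  proof (cases "z0 \<le> z")
    case True
    then show ?thesis
      using remainder[of z0 z z0] \<Psi>_mono[of z0 z z0] z z0 by (simp add: E_def mult_ac)
  next
    case False
    then have "\<bar>Q z0 - Q z - (F z0 - F z) * \<phi> z0\<bar> \<le> C * (z0 - z) * (\<Psi> z0 - \<Psi> z)"
      using remainder[of z z0 z0] z z0 by simp
    moreover have "E z = - (Q z0 - Q z - (F z0 - F z) * \<phi> z0)"
      by (simp add: E_def algebra_simps)
    ultimately show ?thesis
      using False \<Psi>_mono[of z z0 z] z z0 by (simp add: mult_ac)
  qed
  have "(E has_real_derivative 0) (at z0 within {\<alpha>..\<beta>})"
    unfolding has_field_derivative_iff
  proof (rule Lim_null_comparison)
    show "\<forall>\<^sub>F z in at z0 within {\<alpha>..\<beta>}. norm ((E z - E z0) / (z - z0)) \<le> C * \<bar>\<Psi> z - \<Psi> z0\<bar>"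
      using E_bound by (auto simp: E_def eventually_at_filter abs_divide divide_le_eq)
    have "continuous_on {\<alpha>..\<beta>} \<Psi>"
      unfolding \<Psi>_def using integrable_on_subintervals(2)[of \<alpha> \<beta>]
      by (intro indefinite_integral_continuous_1) auto
    then have "((\<lambda>z. \<Psi> z - \<Psi> z0) \<longlongrightarrow> 0) (at z0 within {\<alpha>..\<beta>})"
      using z0 by (simp add: continuous_on_def LIM_zero)
    then show "((\<lambda>z. C * \<bar>\<Psi> z - \<Psi> z0\<bar>) \<longlongrightarrow> 0) (at z0 within {\<alpha>..\<beta>})"
      by (intro tendsto_mult_right_zero tendsto_rabs_zero)
  qed
  then have "((\<lambda>z. Q z0 + (F z - F z0) * \<phi> z0 + E z) has_real_derivative f z0 * \<phi> z0)
      (at z0 within {\<alpha>..\<beta>})"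
    using F_deriv[OF z0] by (auto intro!: derivative_eq_intros)
  then show ?thesis by (simp add: E_def Q_def)
qed

lemma integration_by_parts_primitive:
  assumes "\<alpha> \<le> \<beta>"
  shows "((\<lambda>x. F x * \<psi> x + f x * \<phi> x) has_integral F \<beta> * \<phi> \<beta> - F \<alpha> * \<phi> \<alpha>) {\<alpha>..\<beta>}"
proof -
  have F\<psi>_int: "(\<lambda>x. F x * \<psi> x) integrable_on {\<alpha>..\<beta>}"
    by (rule integrable_on_subintervals(3)) auto
  have "((\<lambda>z. f z * \<phi> z) has_integral
      (F \<beta> * \<phi> \<beta> - integral {\<alpha>..\<beta>} (\<lambda>x. F x * \<psi> x)) - (F \<alpha> * \<phi> \<alpha> - 0)) {\<alpha>..\<beta>}"
    using fundamental_theorem_of_calculus[OF assms, of "\<lambda>z. F z * \<phi> z - integral {\<alpha>..z} (\<lambda>x. F x * \<psi> x)"]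
      derivative_product_primitive
    by (simp add: has_real_derivative_iff_has_vector_derivative[symmetric])
  from has_integral_add[OF integrable_integral[OF F\<psi>_int] this]
  show ?thesis by simp
qed

end

section \<open>Weak solutions and their uniqueness\<close>

definition weak_solution ::
    "(real \<Rightarrow> real) \<Rightarrow> (real \<Rightarrow> real) \<Rightarrow> (real \<Rightarrow> real) \<Rightarrow> real \<Rightarrow> (real \<Rightarrow> real) \<Rightarrow> (real \<Rightarrow> real) \<Rightarrow> bool"
  where "weak_solution a b g L u v \<longleftrightarrow>
    (\<forall>\<phi> \<psi>. H1_deriv L \<phi> \<psi> \<and> \<phi> (-L) = 0 \<and> \<phi> L = 0 \<longrightarrow>
       ((\<lambda>x. a x * v x * \<psi> x + b x * g (u x) * \<phi> x) has_integral 0) {-L..L})"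

lemma critical_point_iff_weak_solution:
  "critical_point a b G L m u \<longleftrightarrow>
     H1m L m u \<and> (\<exists>v. H1_deriv L u v \<and> weak_solution a b (deriv G) L u v)"
  unfolding critical_point_def weak_solution_def ..

lemma H1_deriv_continuous_on:
  assumes "H1_deriv L u v"
  shows "continuous_on {-L..L} u"
proof (rule continuous_on_eq)
  show "continuous_on {-L..L} (\<lambda>x. u (-L) + integral {-L..x} v)"
    using assms unfolding H1_deriv_def by (intro continuous_intros indefinite_integral_continuous_1) auto
  show "u (-L) + integral {-L..x} v = u x" if "x \<in> {-L..L}" for x
  proof -
    have "(v has_integral u x - u (-L)) {-L..x}"
      using assms that unfolding H1_deriv_def by blast
    then show ?thesis by (simp add: integral_unique)
  qed
qed

lemma H1_deriv_absolutely_integrable: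
  "H1_deriv L u v \<Longrightarrow> v absolutely_integrable_on {-L..L}"
  unfolding H1_deriv_def by (blast intro: absolutely_integrable_if_square_integrable)

lemma H1_deriv_diff:
  assumes "H1_deriv L u v" "H1_deriv L w z"
  shows "H1_deriv L (\<lambda>x. u x - w x) (\<lambda>x. v x - z x)"
proof -
  have "(\<lambda>x. 2 * (v x * z x)) integrable_on {-L..L}"
    using assms unfolding H1_deriv_def
    by (intro integrable_on_mult_right integrable_product_if_square_integrable) auto
  moreover have "(\<lambda>x. (v x - z x)\<^sup>2) = (\<lambda>x. (v x)\<^sup>2 - 2 * (v x * z x) + (z x)\<^sup>2)"
    by (auto simp: power2_eq_square algebra_simps)
  ultimately have "(\<lambda>x. (v x - z x)\<^sup>2) integrable_on {-L..L}"
    using assms unfolding H1_deriv_def by (auto intro!: integrable_add integrable_diff)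
  moreover have "((\<lambda>x. v x - z x) has_integral ((u x - w x) - (u (-L) - w (-L)))) {-L..x}"
    if "x \<in> {-L..L}" for x
    using has_integral_diff[of v "u x - u (-L)" "{-L..x}" z "w x - w (-L)"] assms that
    unfolding H1_deriv_def by (auto simp: algebra_simps)
  ultimately show ?thesis
    using assms unfolding H1_deriv_def by (auto intro: integrable_diff)
qed

lemma H1_deriv_zero_boundary_abs_le:
  assumes "H1_deriv L \<phi> \<psi>" "\<phi> (-L) = 0" "\<phi> L = 0" "x \<in> {-L..L}"
  shows "2 * \<bar>\<phi> x\<bar> \<le> integral {-L..L} (\<lambda>x. \<bar>\<psi> x\<bar>)"
proof -
  have x: "-L \<le> x" "x \<le> L" using assms(4) by auto
  have \<psi>_int: "\<psi> integrable_on {-L..L}" and abs_\<psi>_int: "(\<lambda>x. \<bar>\<psi> x\<bar>) integrable_on {-L..L}"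
    using H1_deriv_absolutely_integrable[OF assms(1)] by (auto simp: absolutely_integrable_on_def)
  have "(\<psi> has_integral \<phi> x - \<phi> (-L)) {-L..x}" "(\<psi> has_integral \<phi> L - \<phi> (-L)) {-L..L}"
    using assms(1) x unfolding H1_deriv_def by auto
  then have left: "integral {-L..x} \<psi> = \<phi> x" and whole: "integral {-L..L} \<psi> = 0"
    using assms(2,3) by (auto simp: integral_unique)
  have "\<bar>integral {-L..x} \<psi>\<bar> + \<bar>integral {x..L} \<psi>\<bar>
      \<le> integral {-L..x} (\<lambda>x. \<bar>\<psi> x\<bar>) + integral {x..L} (\<lambda>x. \<bar>\<psi> x\<bar>)"
    using x integrable_subinterval_real[OF \<psi>_int] integrable_subinterval_real[OF abs_\<psi>_int]
    by (intro add_mono abs_integral_le_integral) auto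
  also have "\<dots> = integral {-L..L} (\<lambda>x. \<bar>\<psi> x\<bar>)"
    by (rule Henstock_Kurzweil_Integration.integral_combine[OF x abs_\<psi>_int])
  finally show ?thesis
    using Henstock_Kurzweil_Integration.integral_combine[OF x \<psi>_int] left whole by simp
qed

lemma H1_deriv_zero_boundary_weighted_square_le:
  assumes H: "H1_deriv L \<phi> \<psi>" "\<phi> (-L) = 0" "\<phi> L = 0"
    and b_nonneg: "\<And>x. x \<in> {-L..L} \<Longrightarrow> 0 \<le> b x" and b_cont: "continuous_on {-L..L} b"
  shows "integral {-L..L} (\<lambda>x. b x * (\<phi> x)\<^sup>2) \<le> integral {-L..L} b * (integral {-L..L} (\<lambda>x. \<bar>\<psi> x\<bar>))\<^sup>2 / 4"
proof -
  define I where "I = integral {-L..L} (\<lambda>x. \<bar>\<psi> x\<bar>)"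
  have "integral {-L..L} (\<lambda>x. b x * (\<phi> x)\<^sup>2) \<le> integral {-L..L} (\<lambda>x. b x * (I\<^sup>2 / 4))"
  proof (rule integral_le)
    show "(\<lambda>x. b x * (\<phi> x)\<^sup>2) integrable_on {-L..L}" "(\<lambda>x. b x * (I\<^sup>2 / 4)) integrable_on {-L..L}"
      using b_cont H1_deriv_continuous_on[OF H(1)] by (auto intro!: integrable_continuous_real continuous_intros)
    show "b x * (\<phi> x)\<^sup>2 \<le> b x * (I\<^sup>2 / 4)" if "x \<in> {-L..L}" for x
    proof -
      have "(2 * \<bar>\<phi> x\<bar>)\<^sup>2 \<le> I\<^sup>2"
        using H1_deriv_zero_boundary_abs_le[OF H that] unfolding I_def by (intro power_mono) auto
      then show ?thesis
        using b_nonneg[OF that] by (intro mult_left_mono) (auto simp: power_mult_distrib)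
    qed
  qed
  then show ?thesis unfolding I_def by simp
qed

lemma integral_abs_le_weighted_AM_GM:
  fixes a \<psi> :: "real \<Rightarrow> real"
  assumes a_pos: "\<And>x. x \<in> S \<Longrightarrow> a x > 0"
    and abs_\<psi>_int: "(\<lambda>x. \<bar>\<psi> x\<bar>) integrable_on S"
    and a\<psi>_int: "(\<lambda>x. a x * (\<psi> x)\<^sup>2) integrable_on S"
    and inv_a_int: "(\<lambda>x. 1 / a x) integrable_on S"
    and t: "0 < t"
  shows "integral S (\<lambda>x. \<bar>\<psi> x\<bar>)
    \<le> (t * integral S (\<lambda>x. a x * (\<psi> x)\<^sup>2) + integral S (\<lambda>x. 1 / a x) / t) / 2"
proof -
  have "integral S (\<lambda>x. \<bar>\<psi> x\<bar>) \<le> integral S (\<lambda>x. (t * (a x * (\<psi> x)\<^sup>2) + (1 / a x) / t) / 2)"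
  proof (rule integral_le[OF abs_\<psi>_int])
    show "(\<lambda>x. (t * (a x * (\<psi> x)\<^sup>2) + (1 / a x) / t) / 2) integrable_on S"
      using a\<psi>_int inv_a_int by (intro integrable_on_divide integrable_add integrable_on_mult_right) auto
    show "\<bar>\<psi> x\<bar> \<le> (t * (a x * (\<psi> x)\<^sup>2) + (1 / a x) / t) / 2" if "x \<in> S" for x
    proof -
      have "2 * (t * a x * \<bar>\<psi> x\<bar>) * 1 \<le> (t * a x * \<bar>\<psi> x\<bar>)\<^sup>2 + 1\<^sup>2"
        by (rule sum_squares_bound)
      then show ?thesis
        using a_pos[OF that] t by (simp add: field_simps power2_eq_square)
    qed
  qed
  also have "\<dots> = (t * integral S (\<lambda>x. a x * (\<psi> x)\<^sup>2) + integral S (\<lambda>x. 1 / a x) / t) / 2"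
    by (intro integral_unique has_integral_divide has_integral_add has_integral_mult_right
        integrable_integral a\<psi>_int inv_a_int)
  finally show ?thesis .
qed

lemma square_integral_abs_le_weighted:
  fixes a \<psi> :: "real \<Rightarrow> real"
  assumes a_pos: "\<And>x. x \<in> S \<Longrightarrow> a x > 0"
    and abs_\<psi>_int: "(\<lambda>x. \<bar>\<psi> x\<bar>) integrable_on S"
    and a\<psi>_int: "(\<lambda>x. a x * (\<psi> x)\<^sup>2) integrable_on S"
    and inv_a_int: "(\<lambda>x. 1 / a x) integrable_on S"
  shows "(integral S (\<lambda>x. \<bar>\<psi> x\<bar>))\<^sup>2 \<le> integral S (\<lambda>x. 1 / a x) * integral S (\<lambda>x. a x * (\<psi> x)\<^sup>2)"
proof -
  define I where "I = integral S (\<lambda>x. \<bar>\<psi> x\<bar>)"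
  define A where "A = integral S (\<lambda>x. 1 / a x)"
  define P where "P = integral S (\<lambda>x. a x * (\<psi> x)\<^sup>2)"
  have I_nonneg: "0 \<le> I" and A_nonneg: "0 \<le> A" and P_nonneg: "0 \<le> P"
    unfolding I_def A_def P_def using assms
    by (auto intro!: Henstock_Kurzweil_Integration.integral_nonneg simp: less_imp_le)
  have AM_GM: "I \<le> (t * P + A / t) / 2" if "t > 0" for t
    unfolding I_def A_def P_def by (rule integral_abs_le_weighted_AM_GM[OF assms that])
  show ?thesis
  proof (cases "I = 0")
    case False
    then have I_pos: "I > 0" using I_nonneg by simp
    have "P > 0"
    proof (rule ccontr)
      assume "\<not> P > 0"
      then have "I \<le> A * I / (2 * (A + 1))"
        using AM_GM[of "(A + 1) / I"] I_pos A_nonneg P_nonneg by (simp add: field_simps)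
      also have "\<dots> < I"
        using I_pos A_nonneg by (simp add: field_simps add_nonneg_pos)
      finally show False by simp
    qed
    then have "I \<le> (I + A * P / I) / 2"
      using AM_GM[of "I / P"] I_pos by simp
    then show ?thesis
      using I_pos unfolding I_def[symmetric] A_def[symmetric] P_def[symmetric]
      by (simp add: field_simps power2_eq_square)
  qed (use A_nonneg P_nonneg I_def A_def P_def in simp)
qed

lemma weak_solutions_energy_inequality:
  fixes a b g u w vu vw :: "real \<Rightarrow> real"
  assumes b_pos: "\<And>x. x \<in> {-L..L} \<Longrightarrow> 0 < b x" and b_cont: "continuous_on {-L..L} b"
    and g_cont: "continuous_on UNIV g"
    and g_semimono: "\<And>x y. - \<mu> * (x - y)\<^sup>2 \<le> (g x - g y) * (x - y)"
    and u: "H1_deriv L u vu" "weak_solution a b g L u vu"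
    and w: "H1_deriv L w vw" "weak_solution a b g L w vw"
    and boundary: "u (-L) = w (-L)" "u L = w L"
  shows "(\<lambda>x. a x * (vu x - vw x)\<^sup>2) integrable_on {-L..L}"
    and "integral {-L..L} (\<lambda>x. a x * (vu x - vw x)\<^sup>2) \<le> \<mu> * integral {-L..L} (\<lambda>x. b x * (u x - w x)\<^sup>2)"
proof -
  define X where "X x = b x * (g (u x) - g (w x)) * (u x - w x)" for x
  have "H1_deriv L (\<lambda>x. u x - w x) (\<lambda>x. vu x - vw x)"
    by (rule H1_deriv_diff[OF u(1) w(1)])
  then have "((\<lambda>x. (a x * vu x * (vu x - vw x) + b x * g (u x) * (u x - w x))
      - (a x * vw x * (vu x - vw x) + b x * g (w x) * (u x - w x))) has_integral 0 - 0) {-L..L}"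
    using u(2) w(2) boundary unfolding weak_solution_def by (intro has_integral_diff) auto
  then have sum: "((\<lambda>x. a x * (vu x - vw x)\<^sup>2 + X x) has_integral 0) {-L..L}"
    by (auto simp: X_def power2_eq_square algebra_simps elim!: has_integral_eq[rotated])
  have "continuous_on {-L..L} X"
    unfolding X_def using H1_deriv_continuous_on[OF u(1)] H1_deriv_continuous_on[OF w(1)] b_cont
    by (intro continuous_intros continuous_on_compose2[OF g_cont]) auto
  then have X_int: "X integrable_on {-L..L}"
    by (rule integrable_continuous_real)
  have energy: "((\<lambda>x. a x * (vu x - vw x)\<^sup>2) has_integral - integral {-L..L} X) {-L..L}"
    using has_integral_diff[OF sum integrable_integral[OF X_int]] by simp
  then show "(\<lambda>x. a x * (vu x - vw x)\<^sup>2) integrable_on {-L..L}"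
    by blast
  have "- integral {-L..L} X \<le> integral {-L..L} (\<lambda>x. \<mu> * (b x * (u x - w x)\<^sup>2))"
    unfolding integral_neg[symmetric]
  proof (rule integral_le)
    show "(\<lambda>x. \<mu> * (b x * (u x - w x)\<^sup>2)) integrable_on {-L..L}"
      using b_cont H1_deriv_continuous_on[OF u(1)] H1_deriv_continuous_on[OF w(1)]
      by (intro integrable_continuous_real continuous_intros)
    show "- X x \<le> \<mu> * (b x * (u x - w x)\<^sup>2)" if "x \<in> {-L..L}" for x
      using mult_left_mono[OF g_semimono[of "u x" "w x"] less_imp_le[OF b_pos[OF that]]]
      by (simp add: X_def algebra_simps)
  qed (rule integrable_neg[OF X_int])
  then show "integral {-L..L} (\<lambda>x. a x * (vu x - vw x)\<^sup>2) \<le> \<mu> * integral {-L..L} (\<lambda>x. b x * (u x - w x)\<^sup>2)"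
    using integral_unique[OF energy] by simp
qed

lemma weak_solution_unique:
  fixes a b g u w vu vw :: "real \<Rightarrow> real" and \<mu> :: real
  assumes a_pos: "\<And>x. x \<in> {-L..L} \<Longrightarrow> a x > 0" and b_pos: "\<And>x. x \<in> {-L..L} \<Longrightarrow> b x > 0"
    and a_cont: "continuous_on {-L..L} a" and b_cont: "continuous_on {-L..L} b"
    and g_cont: "continuous_on UNIV g"
    and g_semimono: "\<And>x y. - \<mu> * (x - y)\<^sup>2 \<le> (g x - g y) * (x - y)"
    and small: "\<mu> * integral {-L..L} (\<lambda>x. 1 / a x) * integral {-L..L} b < 4"
    and u: "H1_deriv L u vu" "weak_solution a b g L u vu"
    and w: "H1_deriv L w vw" "weak_solution a b g L w vw"
    and boundary: "u (-L) = w (-L)" "u L = w L"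
  shows "\<forall>x\<in>{-L..L}. w x = u x"
proof -
  define \<phi> where "\<phi> x = u x - w x" for x
  define \<psi> where "\<psi> x = vu x - vw x" for x
  define P where "P = integral {-L..L} (\<lambda>x. a x * (\<psi> x)\<^sup>2)"
  define I where "I = integral {-L..L} (\<lambda>x. \<bar>\<psi> x\<bar>)"
  define A where "A = integral {-L..L} (\<lambda>x. 1 / a x)"
  define B where "B = integral {-L..L} b"
  define Q where "Q = integral {-L..L} (\<lambda>x. b x * (\<phi> x)\<^sup>2)"
  have H: "H1_deriv L \<phi> \<psi>" "\<phi> (-L) = 0" "\<phi> L = 0"
    using H1_deriv_diff[OF u(1) w(1)] boundary unfolding \<phi>_def \<psi>_def by auto
  have abs_\<psi>_int: "(\<lambda>x. \<bar>\<psi> x\<bar>) integrable_on {-L..L}"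
    using H1_deriv_absolutely_integrable[OF H(1)] by (simp add: absolutely_integrable_on_def)
  have inv_a_int: "(\<lambda>x. 1 / a x) integrable_on {-L..L}"
    using a_cont a_pos by (intro integrable_continuous_real continuous_intros) force+
  note energy = weak_solutions_energy_inequality[OF b_pos b_cont g_cont g_semimono u w boundary,
      folded \<phi>_def \<psi>_def]
  have I_square: "I\<^sup>2 \<le> A * P"
    unfolding I_def A_def P_def by (rule square_integral_abs_le_weighted[OF a_pos abs_\<psi>_int energy(1) inv_a_int])
  have nonneg: "0 \<le> A" "0 \<le> B" "0 \<le> Q"
    unfolding A_def B_def Q_def using inv_a_int b_cont H1_deriv_continuous_on[OF H(1)] a_pos b_pos
    by (auto intro!: Henstock_Kurzweil_Integration.integral_nonneg integrable_continuous_real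
        continuous_intros simp: less_imp_le)
  have "P \<le> max \<mu> 0 * Q"
    using energy(2) nonneg mult_right_mono[OF max.cobounded1[of \<mu> 0], of Q] unfolding P_def Q_def by simp
  also have "\<dots> \<le> max \<mu> 0 * (B * I\<^sup>2 / 4)"
    using H1_deriv_zero_boundary_weighted_square_le[OF H _ b_cont] b_pos
    unfolding Q_def B_def I_def by (intro mult_left_mono) (auto simp: less_imp_le)
  also have "\<dots> \<le> max \<mu> 0 * (B * (A * P) / 4)"
    using I_square nonneg by (intro mult_left_mono divide_right_mono) auto
  finally have "P * (1 - max \<mu> 0 * A * B / 4) \<le> 0"
    by (simp add: algebra_simps)
  moreover have "max \<mu> 0 * A * B < 4"
    using small nonneg unfolding A_def B_def by (cases "\<mu> \<le> 0") (auto simp: max_def)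
  moreover have "0 \<le> P"
    unfolding P_def using energy(1) a_pos
    by (auto intro!: Henstock_Kurzweil_Integration.integral_nonneg simp: \<psi>_def less_imp_le)
  ultimately have "P = 0"
    by (simp add: mult_le_0_iff)
  then have "I = 0"
    using I_square nonneg I_def abs_\<psi>_int by (simp add: Henstock_Kurzweil_Integration.integral_nonneg)
  then show ?thesis
    using H1_deriv_zero_boundary_abs_le[OF H] unfolding I_def \<phi>_def by fastforce
qed

lemma critical_points_coincide:
  fixes a b G u w :: "real \<Rightarrow> real" and \<mu> :: real
  assumes a_pos: "\<And>x. x \<in> {-L..L} \<Longrightarrow> a x > 0" and b_pos: "\<And>x. x \<in> {-L..L} \<Longrightarrow> b x > 0"
    and a_cont: "continuous_on {-L..L} a" and b_cont: "continuous_on {-L..L} b"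
    and G'_cont: "continuous_on UNIV (deriv G)"
    and G'_semimono: "\<And>x y. - \<mu> * (x - y)\<^sup>2 \<le> (deriv G x - deriv G y) * (x - y)"
    and small: "\<mu> * integral {-L..L} (\<lambda>x. 1 / a x) * integral {-L..L} b < 4"
    and u: "critical_point a b G L m u" and w: "critical_point a b G L m w"
  shows "\<forall>x\<in>{-L..L}. w x = u x"
proof -
  obtain vu vw where vu: "H1_deriv L u vu" "weak_solution a b (deriv G) L u vu"
    and vw: "H1_deriv L w vw" "weak_solution a b (deriv G) L w vw"
    using u w unfolding critical_point_iff_weak_solution by blast
  have "u (-L) = w (-L)" "u L = w L"
    using u w unfolding critical_point_iff_weak_solution H1m_def by auto
  then show ?thesis
    using weak_solution_unique[OF a_pos b_pos a_cont b_cont G'_cont G'_semimono small vu vw] by blast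
qed

section \<open>The initial value problem\<close>

lemma exp_has_integral:
  fixes k \<alpha> y :: real
  assumes "k \<noteq> 0" "\<alpha> \<le> y"
  shows "((\<lambda>t. exp (k * t)) has_integral (exp (k * y) - exp (k * \<alpha>)) / k) {\<alpha>..y}"
proof -
  have "((\<lambda>t. exp (k * t)) has_integral exp (k * y) / k - exp (k * \<alpha>) / k) {\<alpha>..y}"
    by (rule fundamental_theorem_of_calculus[OF assms(2)])
      (use assms in \<open>auto intro!: derivative_eq_intros
        simp: has_real_derivative_iff_has_vector_derivative[symmetric]\<close>)
  then show ?thesis by (simp add: diff_divide_distrib)
qed

lemma abs_integral_le_exp:
  fixes f :: "real \<Rightarrow> real"
  assumes k: "0 < k" and y: "\<alpha> \<le> y" and f_int: "f integrable_on {\<alpha>..y}"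
    and f_bound: "\<And>t. t \<in> {\<alpha>..y} \<Longrightarrow> \<bar>f t\<bar> \<le> c * exp (k * t)"
  shows "\<bar>integral {\<alpha>..y} f\<bar> \<le> c * exp (k * y) / k"
proof -
  have "0 \<le> c * exp (k * \<alpha>)"
    using f_bound[of \<alpha>] y by (meson abs_ge_zero atLeastAtMost_iff order_refl order_trans)
  then have c: "0 \<le> c" by (simp add: zero_le_mult_iff)
  have exp_int: "((\<lambda>t. c * exp (k * t)) has_integral c * ((exp (k * y) - exp (k * \<alpha>)) / k)) {\<alpha>..y}"
    using exp_has_integral[OF _ y, of k] k by (intro has_integral_mult_right) auto
  have "\<bar>integral {\<alpha>..y} f\<bar> \<le> integral {\<alpha>..y} (\<lambda>t. c * exp (k * t))"
    using f_int exp_int f_bound by (intro abs_integral_le_integral) auto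
  also have "\<dots> \<le> c * (exp (k * y) / k)"
    using integral_unique[OF exp_int] c k by (auto intro!: mult_left_mono divide_right_mono)
  finally show ?thesis by simp
qed

lemma fixed_point_lipschitz_parameter:
  fixes T :: "'p::metric_space \<Rightarrow> 'a::complete_space \<Rightarrow> 'a"
  assumes c: "0 \<le> c" "c < 1"
    and contraction: "\<And>s v w. dist (T s v) (T s w) \<le> c * dist v w"
    and parameter: "\<And>s s' v. dist (T s v) (T s' v) \<le> C * dist s s'"
  obtains V where "\<And>s. T s (V s) = V s" "\<And>s s'. dist (V s) (V s') \<le> C / (1 - c) * dist s s'"
proof
  define V where "V s = (THE v. T s v = v)" for s
  show fixed: "T s (V s) = V s" for s
    unfolding V_def by (rule theI'[OF banach_fix_type[OF c]]) (use contraction in auto)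
  show "dist (V s) (V s') \<le> C / (1 - c) * dist s s'" for s s'
  proof -
    have "dist (V s) (V s') \<le> dist (T s (V s)) (T s (V s')) + dist (T s (V s')) (T s' (V s'))"
      using dist_triangle[of "T s (V s)" "T s' (V s')" "T s (V s')"] fixed by metis
    also have "\<dots> \<le> c * dist (V s) (V s') + C * dist s s'"
      by (intro add_mono contraction parameter)
    finally show ?thesis using c by (simp add: field_simps)
  qed
qed

lemma integral_pos_continuous:
  fixes f :: "real \<Rightarrow> real"
  assumes cd: "c < d" and f_cont: "continuous_on {c..d} f" and f_pos: "\<And>x. x \<in> {c..d} \<Longrightarrow> 0 < f x"
  shows "0 < integral {c..d} f"
proof -
  obtain x0 where x0: "x0 \<in> {c..d}" "\<And>y. y \<in> {c..d} \<Longrightarrow> f x0 \<le> f y"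
    using continuous_attains_inf[OF compact_Icc _ f_cont] cd by auto
  have "(d - c) * f x0 \<le> integral {c..d} f"
    using integral_le[OF integrable_const_ivl integrable_continuous_real[OF f_cont], of "f x0"] x0 cd
    by simp
  moreover have "0 < (d - c) * f x0" using cd f_pos[OF x0(1)] by simp
  ultimately show ?thesis by linarith
qed

lemma apply_Bcontfun_clamp:
  fixes f :: "real \<Rightarrow> 'b::metric_space"
  assumes "continuous_on {c..d} f"
  shows "apply_bcontfun (Bcontfun (\<lambda>x. f (clamp c d x))) = (\<lambda>x. f (clamp c d x))"
proof (rule Bcontfun_inverse)
  have cont: "continuous_on (cbox c d) f"
    using assms by simp
  show "(\<lambda>x. f (clamp c d x)) \<in> bcontfun"
    unfolding bcontfun_def mem_Collect_eq
    using clamp_continuous_on[OF cont]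
      clamp_bounded[OF compact_imp_bounded[OF compact_continuous_image[OF cont compact_cbox]]]
    by blast
qed

lemma continuous_on_apply_bcontfun_family:
  fixes V :: "real \<Rightarrow> 'a::topological_space \<Rightarrow>\<^sub>C real"
  assumes V_lip: "\<And>s s'. dist (V s) (V s') \<le> M * dist s s'"
  shows "continuous_on UNIV (\<lambda>s. apply_bcontfun (V s) x)"
proof (rule lipschitz_on_continuous_on)
  show "(max M 0)-lipschitz_on UNIV (\<lambda>s. apply_bcontfun (V s) x)"
  proof (rule lipschitz_onI)
    show "dist (V s x) (V s' x) \<le> max M 0 * dist s s'" for s s'
      using order_trans[OF dist_bounded V_lip] mult_right_mono[OF max.cobounded1[of M 0] zero_le_dist]
      by (meson order_trans)
  qed simp
qed

definition ivp_slope ::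
    "(real \<Rightarrow> real) \<Rightarrow> (real \<Rightarrow> real) \<Rightarrow> (real \<Rightarrow> real) \<Rightarrow> real \<Rightarrow> real \<Rightarrow> (real \<Rightarrow> real) \<Rightarrow> real \<Rightarrow> real"
  where "ivp_slope a b h L s U y = (s + integral {-L..y} (\<lambda>t. b t * h (U t))) / a y"

definition ivp_integral_form ::
    "(real \<Rightarrow> real) \<Rightarrow> (real \<Rightarrow> real) \<Rightarrow> (real \<Rightarrow> real) \<Rightarrow> real \<Rightarrow> real \<Rightarrow> real \<Rightarrow> (real \<Rightarrow> real) \<Rightarrow> real \<Rightarrow> real"
  where "ivp_integral_form a b h L u0 s U x = u0 + integral {-L..x} (ivp_slope a b h L s U)"

context
  fixes a b h :: "real \<Rightarrow> real" and L :: real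
  assumes a_pos: "\<And>x. x \<in> {-L..L} \<Longrightarrow> 0 < a x"
    and a_cont: "continuous_on {-L..L} a" and b_cont: "continuous_on {-L..L} b"
    and h_cont: "continuous_on UNIV h"
begin

private lemma a_nonzero: "x \<in> {-L..L} \<Longrightarrow> a x \<noteq> 0"
  using a_pos by force

private lemma inverse_a_continuous: "continuous_on {-L..L} (\<lambda>y. 1 / a y)"
  using a_nonzero by (intro continuous_on_divide a_cont continuous_intros) auto

private lemma inverse_a_integral_bounds:
  assumes "y \<in> {-L..L}"
  shows "0 \<le> integral {-L..y} (\<lambda>t. 1 / a t)" "integral {-L..y} (\<lambda>t. 1 / a t) \<le> integral {-L..L} (\<lambda>t. 1 / a t)"
proof -
  note int = integrable_continuous_real[OF inverse_a_continuous]
  show "0 \<le> integral {-L..y} (\<lambda>t. 1 / a t)"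
    using assms a_pos by (intro integral_nonneg integrable_subinterval_real[OF int]) (auto simp: less_imp_le)
  show "integral {-L..y} (\<lambda>t. 1 / a t) \<le> integral {-L..L} (\<lambda>t. 1 / a t)"
    using assms a_pos
    by (intro integral_subset_le int integrable_subinterval_real[OF int]) (auto simp: less_imp_le)
qed

lemma ivp_inner_integrable:
  assumes U: "continuous_on {-L..L} U" and y: "y \<le> L"
  shows "(\<lambda>t. b t * h (U t)) integrable_on {-L..y}"
proof -
  have "continuous_on {-L..L} (\<lambda>t. b t * h (U t))"
    using U b_cont by (intro continuous_intros continuous_on_compose2[OF h_cont]) auto
  then show ?thesis
    using y by (intro integrable_subinterval_real[OF integrable_continuous_real]) auto
qed

lemma ivp_slope_continuous:
  assumes "continuous_on {-L..L} U"
  shows "continuous_on {-L..L} (ivp_slope a b h L s U)"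
  unfolding ivp_slope_def
proof (rule continuous_on_divide[OF _ a_cont])
  show "continuous_on {-L..L} (\<lambda>y. s + integral {-L..y} (\<lambda>t. b t * h (U t)))"
    using ivp_inner_integrable[OF assms order_refl]
    by (intro continuous_intros indefinite_integral_continuous_1)
qed (use a_nonzero in auto)

lemma ivp_integral_form_continuous:
  assumes "continuous_on {-L..L} U"
  shows "continuous_on {-L..L} (ivp_integral_form a b h L u0 s U)"
  unfolding ivp_integral_form_def
  using integrable_continuous_real[OF ivp_slope_continuous[OF assms]]
  by (intro continuous_intros indefinite_integral_continuous_1)

lemma ivp_integral_form_split:
  assumes U: "continuous_on {-L..L} U" and x: "x \<in> {-L..L}"
  shows "ivp_integral_form a b h L u0 s U x = u0 + s * integral {-L..x} (\<lambda>y. 1 / a y)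
    + integral {-L..x} (\<lambda>y. integral {-L..y} (\<lambda>t. b t * h (U t)) / a y)"
proof -
  note inverse_a_continuous
  moreover have "continuous_on {-L..L} (\<lambda>y. integral {-L..y} (\<lambda>t. b t * h (U t)) / a y)"
    using ivp_slope_continuous[OF U, of 0] by (simp add: ivp_slope_def)
  ultimately have inv_a: "(\<lambda>y. 1 / a y) integrable_on {-L..x}"
    and rest: "(\<lambda>y. integral {-L..y} (\<lambda>t. b t * h (U t)) / a y) integrable_on {-L..x}"
    using x by (auto intro!: integrable_subinterval_real[OF integrable_continuous_real])
  have "integral {-L..x} (\<lambda>y. (s + integral {-L..y} (\<lambda>t. b t * h (U t))) / a y)
      = integral {-L..x} (\<lambda>y. s * (1 / a y) + integral {-L..y} (\<lambda>t. b t * h (U t)) / a y)"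
    by (simp add: add_divide_distrib)
  also have "\<dots> = s * integral {-L..x} (\<lambda>y. 1 / a y)
      + integral {-L..x} (\<lambda>y. integral {-L..y} (\<lambda>t. b t * h (U t)) / a y)"
    by (simp only: integral_add[OF integrable_on_mult_right[OF inv_a] rest] integral_mult_right)
  finally show ?thesis
    unfolding ivp_integral_form_def ivp_slope_def by simp
qed

lemma ivp_integral_form_weighted_contraction:
  fixes v1 v2 :: "real \<Rightarrow> real"
  assumes h_lip: "K-lipschitz_on UNIV h"
    and a0: "0 < a0" "\<And>x. x \<in> {-L..L} \<Longrightarrow> a0 \<le> a x"
    and b1: "\<And>x. x \<in> {-L..L} \<Longrightarrow> \<bar>b x\<bar> \<le> b1"
    and k: "0 < k"
    and v: "continuous_on {-L..L} v1" "continuous_on {-L..L} v2" "\<And>t. t \<in> {-L..L} \<Longrightarrow> \<bar>v1 t - v2 t\<bar> \<le> D"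
    and x: "x \<in> {-L..L}"
  shows "\<bar>ivp_integral_form a b h L u0 s (\<lambda>t. exp (k * t) * v1 t) x
           - ivp_integral_form a b h L u0 s (\<lambda>t. exp (k * t) * v2 t) x\<bar>
         \<le> K * b1 * D / (k\<^sup>2 * a0) * exp (k * x)"
proof -
  define U1 U2 where "U1 t = exp (k * t) * v1 t" and "U2 t = exp (k * t) * v2 t" for t
  define F where "F U y = integral {-L..y} (\<lambda>t. b t * h (U t))" for U y
  have U_cont: "continuous_on {-L..L} U1" "continuous_on {-L..L} U2"
    unfolding U1_def U2_def using v by (auto intro!: continuous_intros)
  have K: "0 \<le> K" and b1_nonneg: "0 \<le> b1" and D: "0 \<le> D"
    using lipschitz_on_nonneg[OF h_lip] b1[OF x] v(3)[OF x] by auto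
  have F_diff: "\<bar>F U1 y - F U2 y\<bar> \<le> K * b1 * D * exp (k * y) / k" if y: "y \<in> {-L..L}" for y
  proof -
    have "F U1 y - F U2 y = integral {-L..y} (\<lambda>t. b t * h (U1 t) - b t * h (U2 t))"
      unfolding F_def using y ivp_inner_integrable[OF U_cont(1)] ivp_inner_integrable[OF U_cont(2)]
      by (simp add: integral_diff)
    also have "\<bar>\<dots>\<bar> \<le> K * b1 * D * exp (k * y) / k"
    proof (rule abs_integral_le_exp[OF k])
      show "(\<lambda>t. b t * h (U1 t) - b t * h (U2 t)) integrable_on {-L..y}"
        using y ivp_inner_integrable[OF U_cont(1)] ivp_inner_integrable[OF U_cont(2)]
        by (intro integrable_diff) auto
      show "\<bar>b t * h (U1 t) - b t * h (U2 t)\<bar> \<le> K * b1 * D * exp (k * t)" if t: "t \<in> {-L..y}" for t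
      proof -
        have "\<bar>b t * h (U1 t) - b t * h (U2 t)\<bar> = \<bar>b t\<bar> * \<bar>h (U1 t) - h (U2 t)\<bar>"
          by (simp add: abs_mult right_diff_distrib[symmetric])
        also have "\<dots> \<le> b1 * (K * (exp (k * t) * \<bar>v1 t - v2 t\<bar>))"
          using b1[of t] lipschitz_onD[OF h_lip, of "U1 t" "U2 t"] t y b1_nonneg
          by (intro mult_mono) (auto simp: U1_def U2_def dist_real_def abs_mult right_diff_distrib[symmetric])
        also have "\<dots> \<le> b1 * (K * (exp (k * t) * D))"
          using v(3)[of t] t y b1_nonneg K by (intro mult_left_mono) auto
        finally show ?thesis by (simp add: mult_ac)
      qed
    qed (use y in auto)
    finally show ?thesis .
  qed
  have "ivp_integral_form a b h L u0 s U1 x - ivp_integral_form a b h L u0 s U2 x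
      = integral {-L..x} (\<lambda>y. (F U1 y - F U2 y) / a y)"
    using ivp_integral_form_split[OF U_cont(1) x] ivp_integral_form_split[OF U_cont(2) x]
      ivp_slope_continuous[OF U_cont(1), of 0] ivp_slope_continuous[OF U_cont(2), of 0] x
    by (simp add: F_def ivp_slope_def integral_diff diff_divide_distrib integrable_subinterval_real[OF integrable_continuous_real])
  also have "\<bar>\<dots>\<bar> \<le> K * b1 * D / (k * a0) * exp (k * x) / k"
  proof (rule abs_integral_le_exp[OF k])
    show "(\<lambda>y. (F U1 y - F U2 y) / a y) integrable_on {-L..x}"
      using ivp_slope_continuous[OF U_cont(1), of 0] ivp_slope_continuous[OF U_cont(2), of 0] x
      by (simp add: F_def ivp_slope_def diff_divide_distrib integrable_diff integrable_subinterval_real[OF integrable_continuous_real])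
    show "\<bar>(F U1 y - F U2 y) / a y\<bar> \<le> K * b1 * D / (k * a0) * exp (k * y)" if y: "y \<in> {-L..x}" for y
    proof -
      have yS: "y \<in> {-L..L}" using x y by auto
      have "\<bar>(F U1 y - F U2 y) / a y\<bar> \<le> (K * b1 * D * exp (k * y) / k) / a y"
        using divide_right_mono[OF F_diff[OF yS] less_imp_le[OF a_pos[OF yS]]] a_pos[OF yS]
        by (simp add: abs_divide)
      also have "\<dots> \<le> (K * b1 * D * exp (k * y) / k) / a0"
        using a0 yS K b1_nonneg D k a_pos[OF yS] by (intro divide_left_mono) auto
      finally show ?thesis by simp
    qed
  qed (use x in auto)
  finally show ?thesis
    unfolding U1_def U2_def by (simp add: power2_eq_square field_simps)
qed

lemma ivp_integral_form_slope_lipschitz: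
  assumes U: "continuous_on {-L..L} U" and y: "y \<in> {-L..L}"
  shows "\<bar>ivp_integral_form a b h L u0 s U y - ivp_integral_form a b h L u0 s' U y\<bar>
    \<le> \<bar>s - s'\<bar> * integral {-L..L} (\<lambda>t. 1 / a t)"
  using ivp_integral_form_split[OF U y] inverse_a_integral_bounds[OF y]
  by (simp add: left_diff_distrib[symmetric] abs_mult mult_left_mono)

lemma ivp_integral_form_deviation:
  assumes U: "continuous_on {-L..L} U" and h_bound: "\<And>z. \<bar>h z\<bar> \<le> B" and L: "0 \<le> L"
  shows "\<bar>ivp_integral_form a b h L u0 s U L - (u0 + s * integral {-L..L} (\<lambda>y. 1 / a y))\<bar>
    \<le> B * integral {-L..L} (\<lambda>t. \<bar>b t\<bar>) * integral {-L..L} (\<lambda>y. 1 / a y)"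
proof -
  define Bb where "Bb = integral {-L..L} (\<lambda>t. \<bar>b t\<bar>)"
  have abs_b_int: "(\<lambda>t. \<bar>b t\<bar>) integrable_on {-L..L}"
    using b_cont by (intro integrable_continuous_real continuous_intros)
  have B: "0 \<le> B" using h_bound[of 0] by linarith
  have inner: "\<bar>integral {-L..y} (\<lambda>t. b t * h (U t))\<bar> \<le> B * Bb" if y: "y \<in> {-L..L}" for y
  proof -
    have "\<bar>integral {-L..y} (\<lambda>t. b t * h (U t))\<bar> \<le> integral {-L..y} (\<lambda>t. B * \<bar>b t\<bar>)"
    proof (rule abs_integral_le_integral)
      show "(\<lambda>t. b t * h (U t)) integrable_on {-L..y}"
        using y by (intro ivp_inner_integrable[OF U]) auto
      show "(\<lambda>t. B * \<bar>b t\<bar>) integrable_on {-L..y}"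
        using y by (intro integrable_on_mult_right integrable_subinterval_real[OF abs_b_int]) auto
      show "\<bar>b t * h (U t)\<bar> \<le> B * \<bar>b t\<bar>" for t
        using mult_left_mono[OF h_bound[of "U t"] abs_ge_zero[of "b t"]] by (simp add: abs_mult mult.commute)
    qed
    also have "\<dots> \<le> B * Bb"
      unfolding Bb_def integral_mult_right using y B
      by (intro mult_left_mono integral_subset_le abs_b_int integrable_subinterval_real[OF abs_b_int]) auto
    finally show ?thesis .
  qed
  have "ivp_integral_form a b h L u0 s U L - (u0 + s * integral {-L..L} (\<lambda>y. 1 / a y))
      = integral {-L..L} (\<lambda>y. integral {-L..y} (\<lambda>t. b t * h (U t)) / a y)"
    using ivp_integral_form_split[OF U, of L] L by simp
  also have "\<bar>\<dots>\<bar> \<le> integral {-L..L} (\<lambda>y. B * Bb * (1 / a y))"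
  proof (rule abs_integral_le_integral)
    show "(\<lambda>y. integral {-L..y} (\<lambda>t. b t * h (U t)) / a y) integrable_on {-L..L}"
      using ivp_slope_continuous[OF U, of 0] by (intro integrable_continuous_real) (simp add: ivp_slope_def)
    show "(\<lambda>y. B * Bb * (1 / a y)) integrable_on {-L..L}"
      by (intro integrable_on_mult_right integrable_continuous_real inverse_a_continuous)
    show "\<bar>integral {-L..y} (\<lambda>t. b t * h (U t)) / a y\<bar> \<le> B * Bb * (1 / a y)" if "y \<in> {-L..L}" for y
      using divide_right_mono[OF inner[OF that] less_imp_le[OF a_pos[OF that]]] a_pos[OF that]
      by (simp add: abs_divide)
  qed
  also have "\<dots> = B * Bb * integral {-L..L} (\<lambda>y. 1 / a y)"
    by (rule integral_mult_right)
  finally show ?thesis unfolding Bb_def .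
qed

lemma ivp_solution_weak_solution:
  assumes L: "0 \<le> L" and U_cont: "continuous_on {-L..L} U"
    and U_eq: "\<And>x. x \<in> {-L..L} \<Longrightarrow> U x = ivp_integral_form a b h L u0 s U x"
  shows "H1_deriv L U (ivp_slope a b h L s U)" and "weak_solution a b h L U (ivp_slope a b h L s U)"
proof -
  define v where "v = ivp_slope a b h L s U"
  have v_cont: "continuous_on {-L..L} v"
    unfolding v_def by (rule ivp_slope_continuous[OF U_cont])
  have v_int: "v integrable_on {-L..x}" if "x \<le> L" for x
    using that by (intro integrable_subinterval_real[OF integrable_continuous_real[OF v_cont]]) auto
  have U_start: "U (-L) = u0"
    using U_eq[of "-L"] L by (simp add: ivp_integral_form_def)
  show H1: "H1_deriv L U (ivp_slope a b h L s U)"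
    unfolding H1_deriv_def v_def[symmetric]
  proof (intro conjI ballI)
    show "v integrable_on {-L..L}" by (rule v_int) simp
    show "(\<lambda>x. (v x)\<^sup>2) integrable_on {-L..L}"
      using v_cont by (intro integrable_continuous_real continuous_intros)
    show "(v has_integral U x - U (-L)) {-L..x}" if "x \<in> {-L..L}" for x
      using U_eq[OF that] U_start v_int[of x] that
      by (simp add: ivp_integral_form_def v_def[symmetric] integrable_integral)
  qed
  define f where "f = (\<lambda>t. b t * h (U t))"
  define F where "F y = integral {-L..y} f" for y
  have f_cont: "continuous_on {-L..L} f"
    unfolding f_def using U_cont b_cont by (intro continuous_intros continuous_on_compose2[OF h_cont]) auto
  have av: "a x * v x = s + F x" if "x \<in> {-L..L}" for x
    using a_nonzero[OF that] by (simp add: v_def ivp_slope_def F_def f_def)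
  show "weak_solution a b h L U v"
    unfolding weak_solution_def
  proof (intro allI impI)
    fix \<phi> \<psi> assume test: "H1_deriv L \<phi> \<psi> \<and> \<phi> (-L) = 0 \<and> \<phi> L = 0"
    have by_parts: "((\<lambda>x. F x * \<psi> x + f x * \<phi> x) has_integral F L * \<phi> L - F (-L) * \<phi> (-L)) {-L..L}"
    proof (rule integration_by_parts_primitive)
      show "(F has_real_derivative f x) (at x within {-L..L})" if "x \<in> {-L..L}" for x
        unfolding F_def by (rule integral_has_real_derivative[OF f_cont that])
      show "\<psi> absolutely_integrable_on {-L..L}"
        using test by (auto intro: H1_deriv_absolutely_integrable)
      show "(\<psi> has_integral \<phi> x - \<phi> (-L)) {-L..x}" if "x \<in> {-L..L}" for x
        using test that unfolding H1_deriv_def by blast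
    qed (use f_cont L in auto)
    have "L \<in> {-L..L}" using L by simp
    then have "(\<psi> has_integral \<phi> L - \<phi> (-L)) {-L..L}"
      using test unfolding H1_deriv_def by blast
    then have "((\<lambda>x. s * \<psi> x) has_integral s * (\<phi> L - \<phi> (-L))) {-L..L}"
      by (rule has_integral_mult_right)
    from has_integral_add[OF this by_parts]
    have "((\<lambda>x. s * \<psi> x + (F x * \<psi> x + f x * \<phi> x)) has_integral 0) {-L..L}"
      using test by simp
    then show "((\<lambda>x. a x * v x * \<psi> x + b x * h (U x) * \<phi> x) has_integral 0) {-L..L}"
      by (rule has_integral_eq[rotated]) (simp add: av f_def algebra_simps)
  qed
qed

lemma ivp_shooting:
  assumes L: "0 < L" and h_bound: "\<And>z. \<bar>h z\<bar> \<le> B"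
    and U_cont: "\<And>s. continuous_on {-L..L} (U s)"
    and U_eq: "\<And>s. U s L = ivp_integral_form a b h L u0 s (U s) L"
    and U_param: "continuous_on UNIV (\<lambda>s. U s L)"
  obtains s where "U s L = m"
proof -
  define A where "A = integral {-L..L} (\<lambda>y. 1 / a y)"
  define D where "D = B * integral {-L..L} (\<lambda>t. \<bar>b t\<bar>) * A"
  have A: "0 < A"
    unfolding A_def using L a_pos by (intro integral_pos_continuous inverse_a_continuous) auto
  have D: "0 \<le> D"
    unfolding D_def using A h_bound[of 0] b_cont
    by (intro mult_nonneg_nonneg integral_nonneg integrable_continuous_real continuous_intros) auto
  have deviation: "\<bar>U s L - (u0 + s * A)\<bar> \<le> D" for s
    unfolding U_eq A_def D_def using ivp_integral_form_deviation[OF U_cont h_bound] L by simp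
  have "U ((m - u0 - D) / A) L \<le> m" "m \<le> U ((m - u0 + D) / A) L"
    using deviation[of "(m - u0 - D) / A"] deviation[of "(m - u0 + D) / A"] A by auto
  moreover have "(m - u0 - D) / A \<le> (m - u0 + D) / A"
    using A D by (simp add: divide_right_mono)
  ultimately obtain s where "U s L = m"
    using IVT'[of "\<lambda>s. U s L"] continuous_on_subset[OF U_param] by blast
  then show thesis by (rule that)
qed

lemma ivp_contraction_constants:
  assumes h_lip: "K-lipschitz_on UNIV h" and L: "0 \<le> L"
  obtains a0 b1 k where "0 < a0" "\<And>x. x \<in> {-L..L} \<Longrightarrow> a0 \<le> a x"
    and "\<And>x. x \<in> {-L..L} \<Longrightarrow> \<bar>b x\<bar> \<le> b1" and "0 < k" and "K * b1 / (k\<^sup>2 * a0) \<le> 1 / 2"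
proof -
  have S: "compact {-L..L}" "{-L..L} \<noteq> {}" using L by auto
  obtain a0 where a0: "0 < a0" "\<And>x. x \<in> {-L..L} \<Longrightarrow> a0 \<le> a x"
    using continuous_attains_inf[OF S a_cont] a_pos by metis
  obtain b1 where b1: "\<And>x. x \<in> {-L..L} \<Longrightarrow> \<bar>b x\<bar> \<le> b1"
    using compact_imp_bounded[OF compact_continuous_image[OF b_cont S(1)]] by (force simp: bounded_iff)
  have K: "0 \<le> K" and b1_nonneg: "0 \<le> b1"
    using lipschitz_on_nonneg[OF h_lip] b1[of L] L by auto
  define k where "k = 1 + 2 * K * b1 / a0"
  have k: "0 < k" using a0 K b1_nonneg by (simp add: k_def add_pos_nonneg)
  have "2 * K * b1 / a0 \<le> k\<^sup>2"
    using a0 K b1_nonneg unfolding k_def by (simp add: power2_eq_square field_simps)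
  then have "K * b1 / (k\<^sup>2 * a0) \<le> 1 / 2"
    using a0 k by (simp add: field_simps)
  with a0 b1 k show thesis by (rule that)
qed

lemma ivp_solution_exists:
  assumes h_lip: "K-lipschitz_on UNIV h" and L: "0 \<le> L"
  obtains U where "\<And>s. continuous_on {-L..L} (U s)"
    and "\<And>s x. x \<in> {-L..L} \<Longrightarrow> U s x = ivp_integral_form a b h L u0 s (U s) x"
    and "\<And>x. continuous_on UNIV (\<lambda>s. U s x)"
proof -
  obtain a0 b1 k where a0: "0 < a0" "\<And>x. x \<in> {-L..L} \<Longrightarrow> a0 \<le> a x"
    and b1: "\<And>x. x \<in> {-L..L} \<Longrightarrow> \<bar>b x\<bar> \<le> b1" and k: "0 < k" and k_large: "K * b1 / (k\<^sup>2 * a0) \<le> 1 / 2"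
    by (rule ivp_contraction_constants[OF h_lip L]) blast
  have clamp: "clamp (-L) L x \<in> {-L..L}" for x
    using clamp_in_interval[of "-L" L x] L by simp
  define A where "A = integral {-L..L} (\<lambda>y. 1 / a y)"
  \<comment> \<open>the weight \<open>exp (- k * x)\<close> makes the integral operator a contraction with constant \<open>1 / 2\<close>\<close>
  define W where "W s v x = exp (- k * x) * ivp_integral_form a b h L u0 s (\<lambda>t. exp (k * t) * v t) x"
    for s v x
  define T where "T s v = Bcontfun (\<lambda>x. W s (apply_bcontfun v) (clamp (-L) L x))" for s v
  have T_apply: "apply_bcontfun (T s v) = (\<lambda>x. W s (apply_bcontfun v) (clamp (-L) L x))" for s v
    unfolding T_def W_def
    by (intro apply_Bcontfun_clamp continuous_intros ivp_integral_form_continuous) auto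
  have contraction: "dist (T s v) (T s w) \<le> 1 / 2 * dist v w" for s v w
  proof (rule dist_bound)
    fix x
    define y where "y = clamp (-L) L x"
    have "\<bar>ivp_integral_form a b h L u0 s (\<lambda>t. exp (k * t) * v t) y
        - ivp_integral_form a b h L u0 s (\<lambda>t. exp (k * t) * w t) y\<bar>
        \<le> K * b1 * dist v w / (k\<^sup>2 * a0) * exp (k * y)"
      using dist_bounded[of v _ w]
      by (intro ivp_integral_form_weighted_contraction[OF h_lip a0 b1 k _ _ _ clamp[of x, folded y_def]])
        (auto simp: dist_real_def)
    then have "dist (T s v x) (T s w x) \<le> K * b1 / (k\<^sup>2 * a0) * dist v w"
      unfolding T_apply W_def y_def[symmetric] dist_real_def
      by (simp add: right_diff_distrib[symmetric] abs_mult exp_minus field_simps)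
    also have "\<dots> \<le> 1 / 2 * dist v w"
      using k_large by (intro mult_right_mono) auto
    finally show "dist (T s v x) (T s w x) \<le> 1 / 2 * dist v w" .
  qed
  have parameter: "dist (T s v) (T s' v) \<le> exp (k * L) * A * dist s s'" for s s' v
  proof (rule dist_bound)
    fix x
    define y where "y = clamp (-L) L x"
    have y: "y \<in> {-L..L}" unfolding y_def by (rule clamp)
    have cont: "continuous_on {-L..L} (\<lambda>t. exp (k * t) * v t)"
      by (intro continuous_intros) auto
    have "dist (T s v x) (T s' v x) = exp (- k * y) * \<bar>ivp_integral_form a b h L u0 s (\<lambda>t. exp (k * t) * v t) y
        - ivp_integral_form a b h L u0 s' (\<lambda>t. exp (k * t) * v t) y\<bar>"
      unfolding T_apply W_def y_def[symmetric] dist_real_def by (simp add: right_diff_distrib[symmetric] abs_mult)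
    also have "\<dots> \<le> exp (k * L) * (\<bar>s - s'\<bar> * A)"
      using ivp_integral_form_slope_lipschitz[OF cont y, of u0 s s'] y k mult_left_mono[of "-y" L k]
      unfolding A_def by (intro mult_mono) auto
    finally show "dist (T s v x) (T s' v x) \<le> exp (k * L) * A * dist s s'"
      by (simp add: dist_real_def mult_ac)
  qed
  obtain V where V_fixed: "\<And>s. T s (V s) = V s"
    and V_lip: "\<And>s s'. dist (V s) (V s') \<le> exp (k * L) * A / (1 - 1 / 2) * dist s s'"
    using fixed_point_lipschitz_parameter[of "1 / 2" T "exp (k * L) * A"] contraction parameter by auto
  define U where "U s x = exp (k * x) * V s x" for s x
  show thesis
  proof (rule that)
    show "continuous_on {-L..L} (U s)" for s
      unfolding U_def by (intro continuous_intros) auto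
    show "U s x = ivp_integral_form a b h L u0 s (U s) x" if x: "x \<in> {-L..L}" for s x
    proof -
      have "V s x = W s (V s) x"
        using arg_cong[OF V_fixed[of s], of "\<lambda>f. apply_bcontfun f x"] x unfolding T_apply by simp
      then show ?thesis unfolding U_def W_def by (simp add: exp_minus field_simps)
    qed
    show "continuous_on UNIV (\<lambda>s. U s x)" for x
      unfolding U_def using continuous_on_apply_bcontfun_family[OF V_lip]
      by (intro continuous_intros)
  qed
qed

end

section \<open>A maximum principle\<close>

lemma last_crossing:
  fixes u :: "real \<Rightarrow> real"
  assumes pq: "p \<le> q" and u: "continuous_on {p..q} u" and p: "u p \<le> R" and q: "R < u q"
  obtains c where "p \<le> c" "c < q" "u c = R" "\<And>y. c < y \<Longrightarrow> y \<le> q \<Longrightarrow> R < u y"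
proof -
  define Z where "Z = {p..q} \<inter> u -` {..R}"
  have "closed Z"
    unfolding Z_def using u by (intro continuous_closed_preimage) auto
  moreover have "bounded Z"
    unfolding Z_def by (rule bounded_subset[of "{p..q}"]) auto
  ultimately have "compact Z"
    using compact_eq_bounded_closed by blast
  moreover have "p \<in> Z" using p pq by (simp add: Z_def)
  ultimately obtain c where c: "c \<in> Z" "\<And>z. z \<in> Z \<Longrightarrow> z \<le> c"
    using continuous_attains_sup[of Z "\<lambda>z. z"] by auto
  have c_le: "p \<le> c" "c \<le> q" "u c \<le> R"
    using c(1) by (auto simp: Z_def)
  have above: "R < u y" if "c < y" "y \<le> q" for y
  proof (rule ccontr)
    assume "\<not> R < u y"
    then have "y \<in> Z" using that c_le by (auto simp: Z_def)
    then show False using c(2)[of y] that by simp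
  qed
  have "c \<noteq> q" using c_le q by auto
  then have cq: "c < q" using c_le by simp
  obtain c' where c': "c \<le> c'" "c' \<le> q" "u c' = R"
    using IVT'[of u c R q] c_le q continuous_on_subset[OF u, of "{c..q}"] by auto
  then have "u c = R" using above[of c'] by (cases "c < c'") auto
  then show thesis using that c_le(1) cq above by blast
qed

lemma first_crossing:
  fixes u :: "real \<Rightarrow> real"
  assumes pq: "p \<le> q" and u: "continuous_on {p..q} u" and p: "R < u p" and q: "u q \<le> R"
  obtains d where "p < d" "d \<le> q" "u d = R" "\<And>y. p \<le> y \<Longrightarrow> y < d \<Longrightarrow> R < u y"
proof -
  have "continuous_on {-q..-p} (\<lambda>y. u (- y))"
    by (intro continuous_on_compose2[OF u] continuous_intros) auto
  then obtain c where c: "-q \<le> c" "c < -p" "u (- c) = R" "\<And>y. c < y \<Longrightarrow> y \<le> -p \<Longrightarrow> R < u (- y)"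
    using last_crossing[of "-q" "-p" "\<lambda>y. u (- y)" R] pq p q by auto
  show thesis
  proof (rule that[of "- c"])
    show "R < u y" if "p \<le> y" "y < - c" for y
      using c(4)[of "- y"] that by simp
  qed (use c in auto)
qed

lemma excursion_above_level:
  fixes u :: "real \<Rightarrow> real"
  assumes u: "continuous_on {\<alpha>..\<beta>} u" and boundary: "u \<alpha> \<le> R" "u \<beta> \<le> R"
    and x: "x \<in> {\<alpha>..\<beta>}" "R < u x"
  obtains c d where "\<alpha> \<le> c" "c < x" "x < d" "d \<le> \<beta>" "u c = R" "u d = R"
    and "\<And>y. c \<le> y \<Longrightarrow> y \<le> d \<Longrightarrow> R \<le> u y"
proof -
  obtain c where c: "\<alpha> \<le> c" "c < x" "u c = R" "\<And>y. c < y \<Longrightarrow> y \<le> x \<Longrightarrow> R < u y"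
    using last_crossing[of \<alpha> x u R] continuous_on_subset[OF u, of "{\<alpha>..x}"] boundary(1) x
    by auto
  obtain d where d: "x < d" "d \<le> \<beta>" "u d = R" "\<And>y. x \<le> y \<Longrightarrow> y < d \<Longrightarrow> R < u y"
    using first_crossing[of x \<beta> u R] continuous_on_subset[OF u, of "{x..\<beta>}"] boundary(2) x
    by auto
  have "R \<le> u y" if "c \<le> y" "y \<le> d" for y
  proof (cases "y \<le> x")
    case True
    then show ?thesis using c(3) c(4)[of y] that by (cases "y = c") auto
  next
    case False
    then show ?thesis using d(3) d(4)[of y] that by (cases "y = d") auto
  qed
  with c d show thesis using that by blast
qed

lemma max_principle_integral_form:
  fixes u H a :: "real \<Rightarrow> real"
  assumes u_eq: "\<And>x. x \<in> {\<alpha>..\<beta>} \<Longrightarrow> u x = u \<alpha> + integral {\<alpha>..x} (\<lambda>y. H y / a y)"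
    and H_cont: "continuous_on {\<alpha>..\<beta>} H" and a_cont: "continuous_on {\<alpha>..\<beta>} a"
    and a_pos: "\<And>x. x \<in> {\<alpha>..\<beta>} \<Longrightarrow> 0 < a x"
    and H_mono: "\<And>y1 y2. \<alpha> \<le> y1 \<Longrightarrow> y1 \<le> y2 \<Longrightarrow> y2 \<le> \<beta> \<Longrightarrow> (\<forall>y\<in>{y1..y2}. R \<le> u y) \<Longrightarrow> H y1 \<le> H y2"
    and boundary: "u \<alpha> \<le> R" "u \<beta> \<le> R"
    and x: "x \<in> {\<alpha>..\<beta>}"
  shows "u x \<le> R"
proof (rule ccontr)
  assume "\<not> u x \<le> R"
  then have ux: "R < u x" by simp
  have "\<forall>x\<in>{\<alpha>..\<beta>}. a x \<noteq> 0"
    using a_pos by fastforce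
  then have q_int: "(\<lambda>y. H y / a y) integrable_on {\<alpha>..\<beta>}"
    by (intro integrable_continuous_real continuous_on_divide H_cont a_cont)
  have u_cont: "continuous_on {\<alpha>..\<beta>} u"
  proof (rule continuous_on_eq)
    show "continuous_on {\<alpha>..\<beta>} (\<lambda>x. u \<alpha> + integral {\<alpha>..x} (\<lambda>y. H y / a y))"
      by (intro continuous_intros indefinite_integral_continuous_1 q_int)
    show "u \<alpha> + integral {\<alpha>..x} (\<lambda>y. H y / a y) = u x" if "x \<in> {\<alpha>..\<beta>}" for x
      using u_eq[OF that] by simp
  qed
  have q_int': "(\<lambda>y. H y / a y) integrable_on {y..z}" if "\<alpha> \<le> y" "z \<le> \<beta>" for y z
    by (rule integrable_subinterval_real[OF q_int]) (use that in auto)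
  have u_diff: "u z - u y = integral {y..z} (\<lambda>y. H y / a y)" if "\<alpha> \<le> y" "y \<le> z" "z \<le> \<beta>" for y z
  proof -
    have "integral {\<alpha>..z} (\<lambda>y. H y / a y) - integral {\<alpha>..y} (\<lambda>y. H y / a y)
        = integral {y..z} (\<lambda>y. H y / a y)"
      by (rule integral_interval_diff[OF q_int']) (use that in auto)
    moreover have "u z - u y = integral {\<alpha>..z} (\<lambda>y. H y / a y) - integral {\<alpha>..y} (\<lambda>y. H y / a y)"
      using u_eq[of z] u_eq[of y] that by simp
    ultimately show ?thesis by simp
  qed
  obtain c d where "\<alpha> \<le> c" "c < x" "x < d" "d \<le> \<beta>" "u c = R" "u d = R"
    and above: "\<And>y. c \<le> y \<Longrightarrow> y \<le> d \<Longrightarrow> R \<le> u y"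
    by (rule excursion_above_level[OF u_cont boundary x ux]) blast
  note c = \<open>\<alpha> \<le> c\<close> \<open>c < x\<close> \<open>u c = R\<close> and d = \<open>x < d\<close> \<open>d \<le> \<beta>\<close> \<open>u d = R\<close>
  have H_mono': "H y1 \<le> H y2" if "c \<le> y1" "y1 \<le> y2" "y2 \<le> d" for y1 y2
    using H_mono[of y1 y2] above that c(1) d(2) by auto
  show False
  proof (cases "H x \<le> 0")
    case True
    have "integral {c..x} (\<lambda>y. H y / a y) \<le> integral {c..x} (\<lambda>_. 0)"
    proof (rule integral_le)
      show "H y / a y \<le> 0" if "y \<in> {c..x}" for y
        using H_mono'[of y x] True a_pos[of y] that c d x by (auto intro: divide_nonpos_pos)
    qed (use q_int' c x in auto)
    then show False
      using u_diff[of c x] c x ux by auto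
  next
    case False
    have "integral {x..d} (\<lambda>_. 0) \<le> integral {x..d} (\<lambda>y. H y / a y)"
    proof (rule integral_le)
      show "0 \<le> H y / a y" if "y \<in> {x..d}" for y
        using H_mono'[of x y] False a_pos[of y] that c d x by auto
    qed (use q_int' d x in auto)
    then show False
      using u_diff[of x d] d x ux by auto
  qed
qed

section \<open>Existence by shooting\<close>

lemma ivp_integral_form_cong:
  assumes "\<And>t. t \<in> {-L..L} \<Longrightarrow> h (U t) = h' (U t)" and "x \<le> L"
  shows "ivp_integral_form a b h L u0 s U x = ivp_integral_form a b h' L u0 s U x"
proof -
  have "ivp_slope a b h L s U y = ivp_slope a b h' L s U y" if "y \<le> L" for y
    unfolding ivp_slope_def using assms(1) that by (auto intro!: integral_cong)
  then show ?thesis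
    unfolding ivp_integral_form_def using assms(2) by (auto intro!: integral_cong)
qed

lemma clamp_real: "clamp (a::real) b x = max a (min b x)"
  unfolding clamp_def Basis_real_def by (auto simp: max_def min_def)

lemma truncated_ivp_solution_bounded:
  fixes a b g U :: "real \<Rightarrow> real" and R :: real
  defines "h \<equiv> \<lambda>z. g (clamp (-R) R z)"
  assumes a_pos: "\<And>x. x \<in> {-L..L} \<Longrightarrow> 0 < a x" and a_cont: "continuous_on {-L..L} a"
    and b_pos: "\<And>x. x \<in> {-L..L} \<Longrightarrow> 0 < b x" and b_cont: "continuous_on {-L..L} b"
    and h_cont: "continuous_on UNIV h" and g_signs: "g (-R) \<le> 0" "0 \<le> g R"
    and U_cont: "continuous_on {-L..L} U"
    and U_eq: "\<And>x. x \<in> {-L..L} \<Longrightarrow> U x = ivp_integral_form a b h L u0 s U x"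
    and boundary: "\<bar>U (-L)\<bar> \<le> R" "\<bar>U L\<bar> \<le> R"
    and x: "x \<in> {-L..L}"
  shows "\<bar>U x\<bar> \<le> R"
proof -
  define H where "H y = s + integral {-L..y} (\<lambda>t. b t * h (U t))" for y
  have L: "-L \<le> L" using x by auto
  have R: "0 \<le> R" using boundary(1) by linarith
  have bh_int: "(\<lambda>t. b t * h (U t)) integrable_on {y..z}" if "-L \<le> y" "z \<le> L" for y z
    using that integrable_continuous_real[OF continuous_on_subset[of "{-L..L}"]] U_cont b_cont
    by (intro integrable_subinterval_real[OF integrable_continuous_real])
      (auto intro!: continuous_intros continuous_on_compose2[OF h_cont])
  have H_cont: "continuous_on {-L..L} H"
    unfolding H_def using bh_int[of "-L" L] by (intro continuous_intros indefinite_integral_continuous_1) auto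
  have U_form: "U y = U (-L) + integral {-L..y} (\<lambda>y. H y / a y)" if "y \<in> {-L..L}" for y
    using U_eq[OF that] U_eq[of "-L"] L by (simp add: ivp_integral_form_def ivp_slope_def[abs_def] H_def)
  have H_step: "H y2 - H y1 = g c * integral {y1..y2} b"
    if y: "-L \<le> y1" "y1 \<le> y2" "y2 \<le> L" and c: "\<forall>y\<in>{y1..y2}. clamp (-R) R (U y) = c" for y1 y2 c
  proof -
    have "H y2 - H y1 = integral {y1..y2} (\<lambda>t. b t * h (U t))"
      unfolding H_def using integral_interval_diff[OF bh_int[of "-L" y2], of y1] y by simp
    also have "\<dots> = integral {y1..y2} (\<lambda>t. g c * b t)"
      using c unfolding h_def by (intro integral_cong) (simp add: mult.commute)
    finally show ?thesis by simp
  qed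
  have b_int_nonneg: "0 \<le> integral {y1..y2} b" if "-L \<le> y1" "y2 \<le> L" for y1 y2
    using that b_pos b_cont
    by (intro Henstock_Kurzweil_Integration.integral_nonneg integrable_subinterval_real[OF integrable_continuous_real])
      (auto simp: less_imp_le)
  have "U x \<le> R"
  proof (rule max_principle_integral_form[OF U_form H_cont a_cont a_pos _ _ _ x])
    show "H y1 \<le> H y2" if "-L \<le> y1" "y1 \<le> y2" "y2 \<le> L" "\<forall>y\<in>{y1..y2}. R \<le> U y" for y1 y2
    proof -
      have "\<forall>y\<in>{y1..y2}. clamp (-R) R (U y) = R"
        using that R by (auto simp: clamp_real)
      then have "H y2 - H y1 = g R * integral {y1..y2} b"
        using H_step that by blast
      then show ?thesis
        using mult_nonneg_nonneg[OF g_signs(2) b_int_nonneg[of y1 y2]] that by simp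
    qed
  qed (use boundary in auto)
  moreover have "- U x \<le> R"
  proof (rule max_principle_integral_form[of "-L" L "\<lambda>y. - U y" "\<lambda>y. - H y" a R x])
    show "- U y = - U (-L) + integral {-L..y} (\<lambda>y. - H y / a y)" if "y \<in> {-L..L}" for y
      using U_form[OF that] by simp
    show "- H y1 \<le> - H y2" if "-L \<le> y1" "y1 \<le> y2" "y2 \<le> L" "\<forall>y\<in>{y1..y2}. R \<le> - U y" for y1 y2
    proof -
      have "\<forall>y\<in>{y1..y2}. clamp (-R) R (U y) = -R"
        using that R by (force simp: clamp_real)
      then have "H y2 - H y1 = g (-R) * integral {y1..y2} b"
        using H_step that by blast
      then show ?thesis
        using mult_nonpos_nonneg[OF g_signs(1) b_int_nonneg[of y1 y2]] that by simp
    qed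
  qed (use H_cont a_cont a_pos boundary x in \<open>auto intro: continuous_intros\<close>)
  ultimately show ?thesis by simp
qed

lemma weak_solution_exists:
  fixes a b g :: "real \<Rightarrow> real" and K L m R :: real
  assumes L: "0 < L" and m: "\<bar>m\<bar> \<le> R"
    and a_pos: "\<And>x. x \<in> {-L..L} \<Longrightarrow> 0 < a x" and a_cont: "continuous_on {-L..L} a"
    and b_pos: "\<And>x. x \<in> {-L..L} \<Longrightarrow> 0 < b x" and b_cont: "continuous_on {-L..L} b"
    and g_cont: "continuous_on UNIV g" and g_lip: "K-lipschitz_on {-R..R} g"
    and g_signs: "g (-R) \<le> 0" "0 \<le> g R"
  obtains u v where "H1m L m u" "H1_deriv L u v" "weak_solution a b g L u v"
proof -
  define h where "h = (\<lambda>z. g (clamp (-R) R z))"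
  have clamp_in: "clamp (-R) R z \<in> {-R..R}" for z
    using clamp_in_interval[of "-R" R z] m by simp
  have h_lip: "K-lipschitz_on UNIV h"
  proof (rule lipschitz_onI)
    show "dist (h z) (h w) \<le> K * dist z w" for z w
      using lipschitz_onD[OF g_lip clamp_in clamp_in] dist_clamps_le_dist_args[of "-R" R z w]
        lipschitz_on_nonneg[OF g_lip] unfolding h_def
      by (meson mult_left_mono order_trans)
  qed (rule lipschitz_on_nonneg[OF g_lip])
  have h_cont: "continuous_on UNIV h"
    by (rule lipschitz_on_continuous_on[OF h_lip])
  have "bounded (range h)"
    unfolding h_def using continuous_on_subset[OF g_cont]
    by (intro clamp_bounded compact_imp_bounded compact_continuous_image) auto
  then obtain B where B: "\<And>z. \<bar>h z\<bar> \<le> B"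
    by (auto simp: bounded_iff)
  obtain U where U_cont: "\<And>s. continuous_on {-L..L} (U s)"
    and U_eq: "\<And>s x. x \<in> {-L..L} \<Longrightarrow> U s x = ivp_integral_form a b h L (-m) s (U s) x"
    and U_param: "\<And>x. continuous_on UNIV (\<lambda>s. U s x)"
    by (rule ivp_solution_exists[OF a_pos a_cont b_cont h_cont h_lip]) (use L in auto)
  have "U s L = ivp_integral_form a b h L (-m) s (U s) L" for s
    using U_eq L by simp
  then obtain s where s: "U s L = m"
    using ivp_shooting[OF a_pos a_cont b_cont h_cont L B U_cont _ U_param] by blast
  define u where "u = U s"
  have u_start: "u (-L) = -m"
    using U_eq[of "-L" s] L by (simp add: u_def ivp_integral_form_def)
  have u_bound: "\<bar>u x\<bar> \<le> R" if "x \<in> {-L..L}" for x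
    unfolding u_def
    by (rule truncated_ivp_solution_bounded[OF a_pos a_cont b_pos b_cont h_cont[unfolded h_def] g_signs
          U_cont U_eq[unfolded h_def] _ _ that])
      (use u_start s m u_def in auto)
  have "h (u t) = g (u t)" if "t \<in> {-L..L}" for t
    using clamp_cancel_cbox[of "u t" "-R" R] u_bound[OF that] unfolding h_def by (simp add: abs_le_iff)
  then have u_eq: "u x = ivp_integral_form a b g L (-m) s u x" if "x \<in> {-L..L}" for x
    using U_eq[OF that, of s] ivp_integral_form_cong[where h=h and h'=g and U=u] that by (simp add: u_def)
  have "H1_deriv L u (ivp_slope a b g L s u)" "weak_solution a b g L u (ivp_slope a b g L s u)"
    using ivp_solution_weak_solution[OF a_pos a_cont b_cont g_cont _ U_cont[of s, folded u_def] u_eq] L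
    by auto
  moreover have "H1m L m u"
    unfolding H1m_def H1_def using calculation u_start s u_def by auto
  ultimately show thesis using that by blast
qed

lemma lipschitz_on_interval_if_continuous_derivative:
  fixes g g' :: "real \<Rightarrow> real"
  assumes g_deriv: "\<And>s. (g has_real_derivative g' s) (at s)" and g'_cont: "continuous_on {c..d} g'"
  obtains K where "K-lipschitz_on {c..d} g"
proof -
  obtain B where B: "0 < B" "\<And>x. x \<in> {c..d} \<Longrightarrow> \<bar>g' x\<bar> \<le> B"
    using compact_imp_bounded[OF compact_continuous_image[OF g'_cont compact_Icc]]
    by (force simp: bounded_pos)
  have "B-lipschitz_on {c..d} g"
  proof (rule lipschitz_onI)
    show "dist (g x) (g y) \<le> B * dist x y" if "x \<in> {c..d}" "y \<in> {c..d}" for x y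
      using field_differentiable_bound[of "{c..d}" g g' B x y] g_deriv B that
      by (auto simp: dist_real_def intro: has_field_derivative_at_within)
  qed (use B in simp)
  then show thesis by (rule that)
qed

lemma semimonotone_if_derivative_ge:
  fixes g g' :: "real \<Rightarrow> real"
  assumes g_deriv: "\<And>s. (g has_real_derivative g' s) (at s)" and g'_min: "\<And>s. g' c \<le> g' s"
  shows "g' c * (x - y)\<^sup>2 \<le> (g x - g y) * (x - y)"
proof -
  have incr: "g' c * (q - p) \<le> g q - g p" if "p \<le> q" for p q
  proof -
    have "g p - g' c * p \<le> g q - g' c * q"
    proof (rule DERIV_nonneg_imp_nondecreasing[OF that])
      show "\<exists>d. ((\<lambda>t. g t - g' c * t) has_real_derivative d) (at t) \<and> 0 \<le> d" for t
        using g_deriv[of t] g'_min[of t]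
        by (intro exI[of _ "g' t - g' c"]) (auto intro!: derivative_eq_intros)
    qed
    then show ?thesis by (simp add: algebra_simps)
  qed
  show ?thesis
  proof (cases "y \<le> x")
    case True
    then show ?thesis
      using mult_right_mono[OF incr[OF True], of "x - y"] by (simp add: power2_eq_square mult.assoc)
  next
    case False
    then show ?thesis
      using mult_right_mono[OF incr[of x y], of "y - x"] by (simp add: power2_eq_square algebra_simps)
  qed
qed

lemma integral_interval_le_L1_norm:
  fixes f :: "real \<Rightarrow> real"
  assumes "integrable lborel f"
  shows "f integrable_on {c..d}" and "integral {c..d} f \<le> (\<integral>x. \<bar>f x\<bar> \<partial>lborel)"
proof -
  have si: "set_integrable lborel {c..d} f"
    unfolding set_integrable_def by (rule integrable_mult_indicator) (use assms in auto)
  then show "f integrable_on {c..d}"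
    by (rule set_borel_integral_eq_integral(1))
  have "integral {c..d} f = (\<integral>x. indicator {c..d} x * f x \<partial>lborel)"
    using set_borel_integral_eq_integral(2)[OF si] by (simp add: set_lebesgue_integral_def)
  also have "\<dots> \<le> (\<integral>x. \<bar>f x\<bar> \<partial>lborel)"
    using si assms unfolding set_integrable_def
    by (intro integral_mono) (auto split: split_indicator)
  finally show "integral {c..d} f \<le> (\<integral>x. \<bar>f x\<bar> \<partial>lborel)" .
qed

lemma interval_smallness_if_L1_smallness:
  fixes a b :: "real \<Rightarrow> real" and \<mu> :: real
  assumes a_pos: "\<And>x. 0 < a x" and b_pos: "\<And>x. 0 < b x"
    and a_inv_L1: "integrable lborel (\<lambda>x. 1 / a x)" and b_L1: "integrable lborel b"
    and \<mu>: "\<mu> \<le> 1 / (16 * (\<integral>x. \<bar>1 / a x\<bar> \<partial>lborel) * (\<integral>x. \<bar>b x\<bar> \<partial>lborel))"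
  shows "\<mu> * integral {-L..L} (\<lambda>x. 1 / a x) * integral {-L..L} b < 4"
proof -
  define A B where "A = integral {-L..L} (\<lambda>x. 1 / a x)" and "B = integral {-L..L} b"
  define A' B' where "A' = (\<integral>x. \<bar>1 / a x\<bar> \<partial>lborel)" and "B' = (\<integral>x. \<bar>b x\<bar> \<partial>lborel)"
  have bounds: "0 \<le> A" "A \<le> A'" "0 \<le> B" "B \<le> B'"
    unfolding A_def B_def A'_def B'_def
    using integral_interval_le_L1_norm[OF a_inv_L1] integral_interval_le_L1_norm[OF b_L1] a_pos b_pos
    by (auto intro!: Henstock_Kurzweil_Integration.integral_nonneg simp: less_imp_le)
  show ?thesis
  proof (cases "\<mu> \<le> 0")
    case True
    then show ?thesis
      using mult_nonpos_nonneg[OF True mult_nonneg_nonneg[OF bounds(1,3)]]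
      unfolding A_def B_def by (simp add: mult.assoc)
  next
    case False
    then have "0 < 16 * A' * B'"
      using \<mu> unfolding A'_def[symmetric] B'_def[symmetric]
      by (metis divide_le_0_1_iff less_eq_real_def not_le order_trans)
    then have "\<mu> * (A * B) \<le> 1 / (16 * A' * B') * (A' * B')"
      using False \<mu> bounds unfolding A'_def[symmetric] B'_def[symmetric]
      by (intro mult_mono) (auto intro: mult_mono)
    also have "\<dots> < 4"
      using \<open>0 < 16 * A' * B'\<close> by simp
    finally show ?thesis unfolding A_def B_def by (simp add: mult.assoc)
  qed
qed

theorem proposition6p8:
  fixes a b G :: "real \<Rightarrow> real" and M :: real
  assumes a_pos: "\<forall>x. a x > 0" and b_pos: "\<forall>x. b x > 0"
    and a_even: "\<forall>x. a (-x) = a x" and b_even: "\<forall>x. b (-x) = b x"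
    and a_C1: "a C1_differentiable_on UNIV" and b_C1: "b C1_differentiable_on UNIV"
    and a_inv_L1: "integrable lborel (\<lambda>x. 1 / a x)" and b_L1: "integrable lborel b"
    and G_diff: "\<forall>s. G differentiable (at s)"
    and G'_diff: "\<forall>s. deriv G differentiable (at s)"
    and G''_cont: "continuous_on UNIV (deriv (deriv G))"
    and G_nonneg: "\<forall>s. G s \<ge> 0" and G_even: "\<forall>s. G (-s) = G s"
    and M_pos: "M > 0"
    and G'_neg: "\<forall>s. s < -M \<longrightarrow> deriv G s \<le> 0"
    and G'_pos: "\<forall>s. s > M \<longrightarrow> deriv G s \<ge> 0"
    and cond1: "1 / (16 * (\<integral>x. \<bar>1 / a x\<bar> \<partial>lborel) * (\<integral>x. \<bar>b x\<bar> \<partial>lborel))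
                  \<ge> - deriv (deriv G) 0"
    and cond2: "\<forall>s. s \<noteq> 0 \<longrightarrow> - deriv (deriv G) 0 > - deriv (deriv G) s"
  shows "\<forall>L>0. \<forall>m>0. \<exists>u. critical_point a b G L m u \<and>
           (\<forall>w. critical_point a b G L m w \<longrightarrow> (\<forall>x\<in>{-L..L}. w x = u x))"
proof (intro allI impI)
  fix L m :: real assume L: "L > 0" and m: "m > 0"
  define g where "g = deriv G"
  define R where "R = max m M + 1"
  have g_deriv: "(g has_real_derivative deriv g s) (at s)" for s
    using G'_diff unfolding g_def by (simp add: DERIV_deriv_iff_real_differentiable)
  have g_cont: "continuous_on UNIV g"
    by (intro continuous_at_imp_continuous_on ballI DERIV_isCont[OF g_deriv])
  have a_cont: "continuous_on {-L..L} a" and b_cont: "continuous_on {-L..L} b"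
    using C1_differentiable_imp_continuous_on[OF a_C1] C1_differentiable_imp_continuous_on[OF b_C1]
    by (auto intro: continuous_on_subset)
  obtain K where g_lip: "K-lipschitz_on {-R..R} g"
    using lipschitz_on_interval_if_continuous_derivative[OF g_deriv] G''_cont
    unfolding g_def by (meson continuous_on_subset subset_UNIV)
  obtain u v where u: "H1m L m u" "H1_deriv L u v" "weak_solution a b g L u v"
    by (rule weak_solution_exists[OF L _ _ a_cont _ b_cont g_cont g_lip])
      (use m M_pos G'_neg G'_pos a_pos b_pos in \<open>auto simp: R_def g_def\<close>)
  have semimonotone: "- (- deriv g 0) * (x - y)\<^sup>2 \<le> (g x - g y) * (x - y)" for x y
    using semimonotone_if_derivative_ge[OF g_deriv, of 0] cond2 unfolding g_def
    by (metis less_eq_real_def minus_minus neg_less_iff_less)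
  have small: "- deriv g 0 * integral {-L..L} (\<lambda>x. 1 / a x) * integral {-L..L} b < 4"
    using interval_smallness_if_L1_smallness[OF _ _ a_inv_L1 b_L1] cond1 a_pos b_pos unfolding g_def by blast
  have "critical_point a b G L m u"
    using u unfolding critical_point_iff_weak_solution g_def by blast
  moreover have "\<forall>x\<in>{-L..L}. w x = u x" if "critical_point a b G L m w" for w
    using critical_points_coincide[OF _ _ a_cont b_cont g_cont[unfolded g_def]
        semimonotone[unfolded g_def] small[unfolded g_def] calculation that] a_pos b_pos by blast
  ultimately show "\<exists>u. critical_point a b G L m u \<and>
      (\<forall>w. critical_point a b G L m w \<longrightarrow> (\<forall>x\<in>{-L..L}. w x = u x))"
    by blast
qed

end
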